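(* Let $S$ be the antipode of the connected graded Hopf algebra $C(q)$. Then $S=\bigoplus_{n\ge0}(-1)^n\mathcal{D}_n$ as graded linear endomorphisms of $C(q)$; equivalently $\mathcal{D}_n=(-1)^nS|_{C_n(q)}$ for all $n\ge0$.
   Context: Let $q$ be a prime power, $C_n(q)$ the complex functions on $\mathfrak{gl}_n(\mathbb{F}_q)$ invariant under $\mathrm{GL}_n(\mathbb{F}_q)$-conjugation ($C_0(q)=\mathbb{C}$), and $C(q)=\bigoplus_n C_n(q)$ the connected graded (commutative, co-commutative) Hopf algebra over $\mathbb{C}$ with multiplication on $C_k(q)\otimes C_l(q)$ given by Harish-Chandra induction $R^{k+l}_{k,l}$ from the block-diagonal Levi $\mathfrak{gl}_k\times\mathfrak{gl}_l$, co-multiplication on $C_n(q)$ given by $\sum_{k+l=n}{}^*R^n_{k,l}$, unit the inclusion of $C_0(q)$ and co-unit the projection onto $C_0(q)$ (identifying $C(\mathfrak{gl}_k(\mathbb{F}_q)\times\mathfrak{gl}_l(\mathbb{F}_q))\cong C_k(q)\otimes C_l(q)$). Harish-Chandra restriction and induction for a standard parabolic $P=L\ltimes U_P$ of $\mathrm{GL}_n$ with Lie algebras $\mathcal{P},\mathcal{L},\mathcal{U}_P$: ${}^*R^{\mathcal{G}_n}_{\mathcal{L}}(f)(x)=\frac{1}{|U_P^F|}\sum_{y\in\mathcal{U}_P^F}f(x+y)$, $R^{\mathcal{G}_n}_{\mathcal{L}}(f)(x)=\frac{1}{|P^F|}\sum_{g\in\mathrm{GL}_n(\mathbb{F}_q),\,gxg^{-1}\in\mathcal{P}^F}f(\pi_{\mathcal{L}}(gxg^{-1}))$.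 The duality operation $\mathcal{D}_n$ on $C_n(q)$ is $\mathcal{D}_n(f)=\sum_{P}(-1)^{r(P)}R^{\mathcal{G}_n}_{\mathcal{L}_P}\circ{}^*R^{\mathcal{G}_n}_{\mathcal{L}_P}(f)$, the sum over the $F$-stable parabolic subgroups $P$ containing a fixed $F$-stable Borel subgroup (e.g. the standard block upper triangular parabolics, indexed by compositions $(\lambda_1,\dots,\lambda_k)$ of $n$), $\mathcal{L}_P$ the Lie algebra of an $F$-stable Levi subgroup of $P$, and $r(P)$ the semisimple $\mathbb{F}_q$-rank of $P$ (equal to $n-k$ for the composition $(\lambda_1,\ldots,\lambda_k)$); this is independent of choices; $\mathcal{D}_0=\mathrm{id}_{\mathbb{C}}$. *)

theory Defs
  imports Complex_Main "Jordan_Normal_Form.Gauss_Jordan_Elimination"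
begin

text \<open>Throughout, 'k is a finite field F_q (q = CARD('k) is then a prime power);
  n x n matrices over 'k (elements of gl_n(F_q)) are 'k mat in carrier_mat n n.
  Complex functions on gl_n are represented as functions 'k mat => complex that
  vanish off carrier_mat n n.\<close>

definition GLn :: "nat \<Rightarrow> 'k::{finite,field} mat set" where
  "GLn n = {g \<in> carrier_mat n n. invertible_mat g}"

definition conjm :: "'k::{finite,field} mat \<Rightarrow> 'k mat \<Rightarrow> 'k mat" where
  "conjm g x = g * x * the (mat_inverse g)"

definition classfun :: "nat \<Rightarrow> ('k::{finite,field} mat \<Rightarrow> complex) set" where
  "classfun n = {f. (\<forall>x. x \<notin> carrier_mat n n \<longrightarrow> f x = 0) \<and>
                    (\<forall>x\<in>carrier_mat n n. \<forall>g\<in>GLn n. f (conjm g x) = f x)}"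

definition compositions :: "nat \<Rightarrow> nat list set" where
  "compositions n = {lam. (\<forall>a\<in>set lam. 0 < a) \<and> sum_list lam = n}"

definition blk :: "nat list \<Rightarrow> nat \<Rightarrow> nat" where
  "blk lam i = card {j. j < length lam \<and> sum_list (take (Suc j) lam) \<le> i}"

definition parLie :: "nat list \<Rightarrow> 'k::{finite,field} mat set" where
  "parLie lam = {M \<in> carrier_mat (sum_list lam) (sum_list lam).
      \<forall>i<sum_list lam. \<forall>j<sum_list lam. blk lam j < blk lam i \<longrightarrow> M $$ (i,j) = 0}"

definition nilLie :: "nat list \<Rightarrow> 'k::{finite,field} mat set" where
  "nilLie lam = {M \<in> carrier_mat (sum_list lam) (sum_list lam).
      \<forall>i<sum_list lam. \<forall>j<sum_list lam. blk lam j \<le> blk lam i \<longrightarrow> M $$ (i,j) = 0}"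

definition parGrp :: "nat list \<Rightarrow> 'k::{finite,field} mat set" where
  "parGrp lam = {g \<in> parLie lam. invertible_mat g}"

definition uniGrp :: "nat list \<Rightarrow> 'k::{finite,field} mat set" where
  "uniGrp lam = {g \<in> carrier_mat (sum_list lam) (sum_list lam).
      \<forall>i<sum_list lam. \<forall>j<sum_list lam. blk lam j \<le> blk lam i \<longrightarrow>
         g $$ (i,j) = (if i = j then 1 else 0)}"

definition levProj :: "nat list \<Rightarrow> 'k::{finite,field} mat \<Rightarrow> 'k mat" where
  "levProj lam M = mat (sum_list lam) (sum_list lam)
      (\<lambda>(i,j). if blk lam i = blk lam j then M $$ (i,j) else 0)"

text \<open>Harish-Chandra restriction and induction for the standard parabolic of
  composition lam; functions on the Levi Lie algebra are functions on
  block-diagonal matrices.\<close>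
definition HC_res :: "nat list \<Rightarrow> ('k::{finite,field} mat \<Rightarrow> complex) \<Rightarrow> 'k mat \<Rightarrow> complex" where
  "HC_res lam f x = (if x \<in> carrier_mat (sum_list lam) (sum_list lam)
      then (1 / of_nat (card (uniGrp lam :: 'k mat set))) * (\<Sum>y\<in>nilLie lam. f (x + y))
      else 0)"

definition HC_ind :: "nat list \<Rightarrow> ('k::{finite,field} mat \<Rightarrow> complex) \<Rightarrow> 'k mat \<Rightarrow> complex" where
  "HC_ind lam h x = (if x \<in> carrier_mat (sum_list lam) (sum_list lam)
      then (1 / of_nat (card (parGrp lam :: 'k mat set))) *
        (\<Sum>g\<in>{g \<in> GLn (sum_list lam). conjm g x \<in> parLie lam}. h (levProj lam (conjm g x)))
      else 0)"

definition duality :: "nat \<Rightarrow> ('k::{finite,field} mat \<Rightarrow> complex) \<Rightarrow> 'k mat \<Rightarrow> complex" where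
  "duality n f = (\<lambda>x. \<Sum>lam\<in>compositions n.
      (-1) ^ (n - length lam) * HC_ind lam (HC_res lam f) x)"

text \<open>Hopf structure. An element of C_k(q) (x) C_l(q) = C(gl_k x gl_l) is a
  function F x y of a k x k matrix x and an l x l matrix y.\<close>
definition coprod :: "nat \<Rightarrow> nat \<Rightarrow> ('k::{finite,field} mat \<Rightarrow> complex) \<Rightarrow> 'k mat \<Rightarrow> 'k mat \<Rightarrow> complex" where
  "coprod k l f x y = (if x \<in> carrier_mat k k \<and> y \<in> carrier_mat l l
      then HC_res [k, l] f (four_block_mat x (0\<^sub>m k l) (0\<^sub>m l k) y) else 0)"

definition hprod :: "nat \<Rightarrow> nat \<Rightarrow> ('k::{finite,field} mat \<Rightarrow> 'k mat \<Rightarrow> complex) \<Rightarrow> 'k mat \<Rightarrow> complex" where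
  "hprod k l F x = (if x \<in> carrier_mat (k + l) (k + l)
      then (1 / of_nat (card (parGrp [k, l] :: 'k mat set))) *
        (\<Sum>g\<in>{g \<in> GLn (k + l). conjm g x \<in> parLie [k, l]}.
           F (mat k k (\<lambda>(i,j). conjm g x $$ (i, j)))
             (mat l l (\<lambda>(i,j). conjm g x $$ (k + i, k + j))))
      else 0)"

text \<open>Antipode of the connected graded Hopf algebra C(q): a graded linear
  endomorphism S (S n acts on C_n(q)) with m o (S (x) id) o Delta = eta o eps =
  m o (id (x) S) o Delta. On C_n, eta o eps is the identity for n = 0 and 0 otherwise.\<close>
definition is_antipode :: "(nat \<Rightarrow> ('k::{finite,field} mat \<Rightarrow> complex) \<Rightarrow> 'k mat \<Rightarrow> complex) \<Rightarrow> bool" where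
  "is_antipode S \<longleftrightarrow>
     (\<forall>n. \<forall>f\<in>classfun n. S n f \<in> classfun n) \<and>
     (\<forall>n. \<forall>f\<in>classfun n. \<forall>g\<in>classfun n. \<forall>a b.
        S n (\<lambda>x. a * f x + b * g x) = (\<lambda>x. a * S n f x + b * S n g x)) \<and>
     (\<forall>n. \<forall>f\<in>classfun n.
        (\<lambda>z. \<Sum>k\<in>{0..n}. hprod k (n - k) (\<lambda>x y. S k (\<lambda>x'. coprod k (n - k) f x' y) x) z)
          = (if n = 0 then f else (\<lambda>x. 0))) \<and>
     (\<forall>n. \<forall>f\<in>classfun n.
        (\<lambda>z. \<Sum>k\<in>{0..n}. hprod k (n - k) (\<lambda>x y. S (n - k) (\<lambda>y'. coprod k (n - k) f x y') y) z)
          = (if n = 0 then f else (\<lambda>x. 0)))"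

end

theory Submission
  imports Defs "Jordan_Normal_Form.Determinant"
begin

text \<open>
  Write R and *R for Harish-Chandra induction and restriction through the standard parabolic of
  a composition. Both are transitive when a composition al @ be of k + l refines the two-block
  Levi gl_k \<times> gl_l, and they act trivially on class functions for a one-block composition.
  Since (-1)^k D_k = \<Sum>al. (-1)^length al R_al *R_al over the compositions al of k, the left
  antipode expression m \<circ> ((-1)^k D_k \<otimes> id) \<circ> \<Delta> applied to f \<in> C_n(q) becomes the sum of
  (-1)^length al R_(al @ [n-k]) *R_(al @ [n-k]) f over all k and al. For n > 0 each composition of
  n occurs twice, once as itself (k = n) and once split off its last part (k < n), with opposite
  signs, so everything cancels; the right antipode equation is symmetric. Finally an antipode of a
  connected graded bialgebra is unique, since the left antipode equation determines it degree by
  degree.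
\<close>

section \<open>The finite general linear group\<close>

lemma finite_carrier_mat: "finite (carrier_mat n m :: 'a::finite mat set)"
proof -
  have "carrier_mat n m \<subseteq> (\<lambda>f. mat n m f) ` (({0..<n}\<times>{0..<m}) \<rightarrow>\<^sub>E (UNIV::'a set))"
  proof
    fix M :: "'a mat" assume M: "M \<in> carrier_mat n m"
    let ?f = "restrict (\<lambda>ij. M $$ ij) ({0..<n}\<times>{0..<m})"
    have "M = mat n m ?f" using M by (intro eq_matI) auto
    moreover have "?f \<in> ({0..<n}\<times>{0..<m}) \<rightarrow>\<^sub>E UNIV" by auto
    ultimately show "M \<in> (\<lambda>f. mat n m f) ` (({0..<n}\<times>{0..<m}) \<rightarrow>\<^sub>E UNIV)" by blast
  qed
  moreover have "finite (({0..<n}\<times>{0..<m}) \<rightarrow>\<^sub>E (UNIV::'a set))"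
    by (intro finite_PiE) auto
  ultimately show ?thesis by (meson finite_surj)
qed

abbreviation mat_inv :: "'k::field mat \<Rightarrow> 'k mat" where
  "mat_inv g \<equiv> the (mat_inverse g)"

lemma GLn_iff_Units:
  "g \<in> GLn n \<longleftrightarrow> g \<in> Units (ring_mat TYPE('k::{finite,field}) n ())"
proof
  assume "g \<in> GLn n"
  then have g: "g \<in> carrier_mat n n" and "invertible_mat g" by (auto simp: GLn_def)
  then obtain B where gB: "g * B = 1\<^sub>m n" and Bg: "B * g = 1\<^sub>m (dim_row B)"
    unfolding invertible_mat_def inverts_mat_def by auto
  have "dim_col B = n" using arg_cong[OF gB, of dim_col] by simp
  moreover have "dim_row B = n" using arg_cong[OF Bg, of dim_col] g by simp
  ultimately show "g \<in> Units (ring_mat TYPE('k) n ())"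
    unfolding Units_def ring_mat_simps using g gB Bg by (auto intro!: bexI[of _ B])
next
  assume "g \<in> Units (ring_mat TYPE('k) n ())"
  then obtain B where "g \<in> carrier_mat n n" "B \<in> carrier_mat n n" "g * B = 1\<^sub>m n" "B * g = 1\<^sub>m n"
    unfolding Units_def ring_mat_simps by auto
  then show "g \<in> GLn n"
    unfolding GLn_def invertible_mat_def inverts_mat_def by (auto intro!: exI[of _ B])
qed

lemma GLn_iff_det:
  "g \<in> GLn n \<longleftrightarrow> g \<in> carrier_mat n n \<and> det g \<noteq> (0::'k::{finite,field})"
  using unit_imp_det_non_zero[of g n "()"] det_non_zero_imp_unit[of g n "()"] GLn_iff_Units[of g n]
  by (auto simp: GLn_def)

lemma GLn_carrier: "g \<in> GLn n \<Longrightarrow> g \<in> carrier_mat n n"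
  by (simp add: GLn_def)

lemma finite_GLn: "finite (GLn n :: 'k::{finite,field} mat set)"
  by (rule finite_subset[OF _ finite_carrier_mat]) (auto simp: GLn_def)

lemma GLn_one: "(1\<^sub>m n :: 'k::{finite,field} mat) \<in> GLn n"
  by (simp add: GLn_iff_det)

lemma card_GLn_pos: "card (GLn n :: 'k::{finite,field} mat set) > 0"
  using finite_GLn GLn_one card_gt_0_iff by blast

lemma GLn_mult:
  "(g::'k::{finite,field} mat) \<in> GLn n \<Longrightarrow> h \<in> GLn n \<Longrightarrow> g * h \<in> GLn n"
  by (auto simp: GLn_iff_det det_mult)

lemma mat_inv_GLn:
  assumes "(g::'k::{finite,field} mat) \<in> GLn n"
  shows "mat_inv g \<in> carrier_mat n n" "g * mat_inv g = 1\<^sub>m n" "mat_inv g * g = 1\<^sub>m n"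
proof -
  have g: "g \<in> carrier_mat n n" using assms by (rule GLn_carrier)
  obtain B where "mat_inverse g = Some B"
    using mat_inverse(1)[OF g, of "()"] assms GLn_iff_Units by (cases "mat_inverse g") auto
  then show "mat_inv g \<in> carrier_mat n n" "g * mat_inv g = 1\<^sub>m n" "mat_inv g * g = 1\<^sub>m n"
    using mat_inverse(2)[OF g] by auto
qed

lemma GLn_mat_inv: assumes "(g::'k::{finite,field} mat) \<in> GLn n" shows "mat_inv g \<in> GLn n"
proof -
  have "det (mat_inv g) * det g = 1"
    using det_mult[OF mat_inv_GLn(1)[OF assms] GLn_carrier[OF assms]] mat_inv_GLn(3)[OF assms] by simp
  then show ?thesis using mat_inv_GLn(1)[OF assms] by (auto simp: GLn_iff_det)
qed

lemma mat_inv_mult_cancel_left: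
  assumes "(d::'k::{finite,field} mat) \<in> GLn n" "g \<in> carrier_mat n m"
  shows "mat_inv d * (d * g) = g" "d * (mat_inv d * g) = g"
proof -
  note D = GLn_carrier[OF assms(1)] mat_inv_GLn[OF assms(1)]
  have "mat_inv d * (d * g) = (mat_inv d * d) * g" using D assms by (intro assoc_mult_mat[symmetric]) auto
  then show "mat_inv d * (d * g) = g" using D assms by simp
  have "d * (mat_inv d * g) = (d * mat_inv d) * g" using D assms by (intro assoc_mult_mat[symmetric]) auto
  then show "d * (mat_inv d * g) = g" using D assms by simp
qed

lemma mult_mat_inv_cancel_right:
  assumes "(d::'k::{finite,field} mat) \<in> GLn n" "g \<in> carrier_mat m n"
  shows "g * d * mat_inv d = g" "g * mat_inv d * d = g"
proof -
  note D = GLn_carrier[OF assms(1)] mat_inv_GLn[OF assms(1)]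
  have "g * d * mat_inv d = g * (d * mat_inv d)" using D assms by (intro assoc_mult_mat) auto
  then show "g * d * mat_inv d = g" using D assms by simp
  have "g * mat_inv d * d = g * (mat_inv d * d)" using D assms by (intro assoc_mult_mat) auto
  then show "g * mat_inv d * d = g" using D assms by simp
qed

lemma mat_inv_sandwich:
  assumes a: "(a::'k::{finite,field} mat) \<in> GLn k" and b: "b \<in> GLn l" and B: "B \<in> carrier_mat k l"
  shows "mat_inv a * (a * B * mat_inv b) * b = B"
proof -
  have aB: "a * B \<in> carrier_mat k l" using GLn_carrier[OF a] B by simp
  have "mat_inv a * (a * B * mat_inv b) * b = mat_inv a * (a * B * mat_inv b * b)"
    using mat_inv_GLn(1)[OF a] mat_inv_GLn(1)[OF b] GLn_carrier[OF b] aB by (intro assoc_mult_mat) auto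
  also have "\<dots> = B" using mult_mat_inv_cancel_right(2)[OF b aB] mat_inv_mult_cancel_left(1)[OF a B] by simp
  finally show ?thesis .
qed

lemma mat_inv_unique:
  assumes "(g::'k::{finite,field} mat) \<in> GLn n" "B \<in> carrier_mat n n" "g * B = 1\<^sub>m n"
  shows "mat_inv g = B"
  using mat_inv_mult_cancel_left(1)[OF assms(1,2)] assms(3) mat_inv_GLn(1)[OF assms(1)] by simp

lemma mat_inv_mult:
  assumes "(g::'k::{finite,field} mat) \<in> GLn n" "h \<in> GLn n"
  shows "mat_inv (g * h) = mat_inv h * mat_inv g"
proof (rule mat_inv_unique[OF GLn_mult[OF assms]])
  note G = GLn_carrier[OF assms(1)] GLn_carrier[OF assms(2)] mat_inv_GLn[OF assms(1)] mat_inv_GLn[OF assms(2)]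
  show c: "mat_inv h * mat_inv g \<in> carrier_mat n n" using G by simp
  have "g * h * (mat_inv h * mat_inv g) = g * (h * (mat_inv h * mat_inv g))"
    using G c by (intro assoc_mult_mat) auto
  then show "g * h * (mat_inv h * mat_inv g) = 1\<^sub>m n"
    using mat_inv_mult_cancel_left(2)[OF assms(2) G(3)] G by simp
qed

lemma mat_inv_mat_inv:
  "(g::'k::{finite,field} mat) \<in> GLn n \<Longrightarrow> mat_inv (mat_inv g) = g"
  using mat_inv_unique[OF GLn_mat_inv, of g n g] mat_inv_GLn[of g n] GLn_carrier by blast

lemma mat_inv_one: "mat_inv (1\<^sub>m n :: 'k::{finite,field} mat) = 1\<^sub>m n"
  using mat_inv_unique[OF GLn_one, of "1\<^sub>m n" n] by simp

lemma conjm_carrier: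
  "(g::'k::{finite,field} mat) \<in> GLn n \<Longrightarrow> conjm g x \<in> carrier_mat n n"
  unfolding conjm_def using mat_inv_GLn[of g n] GLn_carrier[of g n] by auto

lemma conjm_mult:
  assumes "(g::'k::{finite,field} mat) \<in> GLn n" "h \<in> GLn n" "x \<in> carrier_mat n n"
  shows "conjm (g * h) x = conjm g (conjm h x)"
  unfolding conjm_def mat_inv_mult[OF assms(1,2)]
  using GLn_carrier[OF assms(1)] GLn_carrier[OF assms(2)] mat_inv_GLn[OF assms(1)] mat_inv_GLn[OF assms(2)] assms(3)
  by (simp add: assoc_mult_mat[of _ n n _ n _ n])

lemma conjm_one:
  "x \<in> carrier_mat n n \<Longrightarrow> conjm (1\<^sub>m n :: 'k::{finite,field} mat) x = x"
  unfolding conjm_def mat_inv_one by simp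

section \<open>Block structure of standard parabolics\<close>

lemma sum_list_take_le: "sum_list (take m (xs::nat list)) \<le> sum_list xs"
proof -
  have "sum_list xs = sum_list (take m xs) + sum_list (drop m xs)"
    by (metis append_take_drop_id sum_list_append)
  then show ?thesis by simp
qed

lemma blk_less_length: assumes "i < sum_list lam" shows "blk lam i < length lam"
proof -
  have ne: "lam \<noteq> []" using assms by auto
  have "{j. j < length lam \<and> sum_list (take (Suc j) lam) \<le> i} \<subseteq> {..<length lam - 1}"
  proof
    fix j assume j: "j \<in> {j. j < length lam \<and> sum_list (take (Suc j) lam) \<le> i}"
    have "j \<noteq> length lam - 1"
    proof
      assume "j = length lam - 1"
      then have "Suc j = length lam" using ne by (cases lam) auto
      then show False using j assms by auto
    qed
    then show "j \<in> {..<length lam - 1}" using j by auto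
  qed
  then have "blk lam i \<le> length lam - 1" unfolding blk_def
    by (metis card_lessThan card_mono finite_lessThan)
  then show ?thesis using ne by (cases lam) auto
qed

lemma blk_single: "i < k \<Longrightarrow> blk [k] i = 0"
  unfolding blk_def by auto

lemma blk_append_less:
  assumes i: "i < sum_list a" shows "blk (a @ b) i = blk a i"
proof -
  have "{j. j < length (a @ b) \<and> sum_list (take (Suc j) (a @ b)) \<le> i}
      = {j. j < length a \<and> sum_list (take (Suc j) a) \<le> i}"
  proof (rule Set.set_eqI, rule iffI)
    fix j assume j: "j \<in> {j. j < length (a @ b) \<and> sum_list (take (Suc j) (a @ b)) \<le> i}"
    have "j < length a"
    proof (rule ccontr)
      assume "\<not> j < length a"
      then have "sum_list a \<le> sum_list (take (Suc j) (a @ b))" by simp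
      then show False using j i by simp
    qed
    then show "j \<in> {j. j < length a \<and> sum_list (take (Suc j) a) \<le> i}" using j by simp
  next
    fix j assume j: "j \<in> {j. j < length a \<and> sum_list (take (Suc j) a) \<le> i}"
    then show "j \<in> {j. j < length (a @ b) \<and> sum_list (take (Suc j) (a @ b)) \<le> i}" by simp
  qed
  then show ?thesis using i unfolding blk_def by simp
qed

lemma blk_append_ge:
  assumes i: "\<not> i < sum_list a" shows "blk (a @ b) i = length a + blk b (i - sum_list a)"
proof -
  let ?B = "{j. j < length b \<and> sum_list (take (Suc j) b) \<le> i - sum_list a}"
  have "{j. j < length (a @ b) \<and> sum_list (take (Suc j) (a @ b)) \<le> i}
      = {..<length a} \<union> (\<lambda>j. length a + j) ` ?B"
  proof (rule Set.set_eqI, rule iffI)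
    fix j assume j: "j \<in> {j. j < length (a @ b) \<and> sum_list (take (Suc j) (a @ b)) \<le> i}"
    show "j \<in> {..<length a} \<union> (\<lambda>j. length a + j) ` ?B"
    proof (cases "j < length a")
      case True then show ?thesis by simp
    next
      case F: False
      then have "Suc j - length a = Suc (j - length a)" by simp
      then have "sum_list (take (Suc j) (a @ b)) = sum_list a + sum_list (take (Suc (j - length a)) b)"
        using F by simp
      then have "j - length a \<in> ?B" using j F i by auto
      moreover have "j = length a + (j - length a)" using F by simp
      ultimately show ?thesis by blast
    qed
  next
    fix j assume j: "j \<in> {..<length a} \<union> (\<lambda>j. length a + j) ` ?B"
    show "j \<in> {j. j < length (a @ b) \<and> sum_list (take (Suc j) (a @ b)) \<le> i}"
    proof (cases "j < length a")
      case True
      then have "sum_list (take (Suc j) (a @ b)) = sum_list (take (Suc j) a)" by simp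
      also have "\<dots> \<le> sum_list a" by (rule sum_list_take_le)
      finally show ?thesis using True i by simp
    next
      case F: False
      then obtain j' where j': "j = length a + j'" "j' \<in> ?B" using j by auto
      have "Suc j - length a = Suc j'" using j' by simp
      then have "sum_list (take (Suc j) (a @ b)) = sum_list a + sum_list (take (Suc j') b)"
        using F by simp
      then show ?thesis using j' i by auto
    qed
  qed
  moreover have "card ({..<length a} \<union> (\<lambda>j. length a + j) ` ?B) = length a + card ?B"
    by (subst card_Un_disjoint) (auto simp: card_image inj_on_def)
  ultimately show ?thesis using i unfolding blk_def by simp
qed

lemma blk_append:
  "blk (a @ b) i = (if i < sum_list a then blk a i else length a + blk b (i - sum_list a))"
  by (simp add: blk_append_less blk_append_ge)

definition ul_block :: "nat \<Rightarrow> 'a mat \<Rightarrow> 'a mat" where "ul_block k M = mat k k (\<lambda>(i,j). M $$ (i,j))"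
definition lr_block :: "nat \<Rightarrow> nat \<Rightarrow> 'a mat \<Rightarrow> 'a mat" where "lr_block k l M = mat l l (\<lambda>(i,j). M $$ (k+i,k+j))"
definition ur_block :: "nat \<Rightarrow> nat \<Rightarrow> 'a mat \<Rightarrow> 'a mat" where "ur_block k l M = mat k l (\<lambda>(i,j). M $$ (i,k+j))"
definition ll_block :: "nat \<Rightarrow> nat \<Rightarrow> 'a mat \<Rightarrow> 'a mat" where "ll_block k l M = mat l k (\<lambda>(i,j). M $$ (k+i,j))"

lemma block_carrier[simp]:
  "ul_block k M \<in> carrier_mat k k" "lr_block k l M \<in> carrier_mat l l"
  "ur_block k l M \<in> carrier_mat k l" "ll_block k l M \<in> carrier_mat l k"
  unfolding ul_block_def lr_block_def ur_block_def ll_block_def by auto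

lemma dim_block[simp]: "dim_row (ul_block k M) = k" "dim_col (ul_block k M) = k"
  "dim_row (lr_block k l M) = l" "dim_col (lr_block k l M) = l"
  "dim_row (ur_block k l M) = k" "dim_col (ur_block k l M) = l"
  "dim_row (ll_block k l M) = l" "dim_col (ll_block k l M) = k"
  unfolding ul_block_def lr_block_def ur_block_def ll_block_def by auto

lemma index_block[simp]:
  "i < k \<Longrightarrow> j < k \<Longrightarrow> ul_block k M $$ (i,j) = M $$ (i,j)"
  "i < l \<Longrightarrow> j < l \<Longrightarrow> lr_block k l M $$ (i,j) = M $$ (k+i,k+j)"
  "i < k \<Longrightarrow> j < l \<Longrightarrow> ur_block k l M $$ (i,j) = M $$ (i,k+j)"
  "i < l \<Longrightarrow> j < k \<Longrightarrow> ll_block k l M $$ (i,j) = M $$ (k+i,j)"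
  unfolding ul_block_def lr_block_def ur_block_def ll_block_def by auto

lemma four_block_mat_blocks: assumes "M \<in> carrier_mat (k+l) (k+l)"
  shows "M = four_block_mat (ul_block k M) (ur_block k l M) (ll_block k l M) (lr_block k l M)"
  by (rule eq_matI) (insert assms, auto)

lemma blocks_four_block_mat:
  assumes "A \<in> carrier_mat k k" "B \<in> carrier_mat k l" "C \<in> carrier_mat l k" "D \<in> carrier_mat l l"
  shows "ul_block k (four_block_mat A B C D) = A" "ur_block k l (four_block_mat A B C D) = B"
    "ll_block k l (four_block_mat A B C D) = C" "lr_block k l (four_block_mat A B C D) = D"
proof -
  show "ul_block k (four_block_mat A B C D) = A" by (rule eq_matI) (insert assms, auto)
  show "ur_block k l (four_block_mat A B C D) = B" by (rule eq_matI) (insert assms, auto)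
  show "ll_block k l (four_block_mat A B C D) = C" by (rule eq_matI) (insert assms, auto)
  show "lr_block k l (four_block_mat A B C D) = D" by (rule eq_matI) (insert assms, auto)
qed

definition block_zero_set :: "(nat \<Rightarrow> nat \<Rightarrow> bool) \<Rightarrow> nat list \<Rightarrow> 'a::zero mat set" where
  "block_zero_set R lam = {M \<in> carrier_mat (sum_list lam) (sum_list lam).
      \<forall>i<sum_list lam. \<forall>j<sum_list lam. R (blk lam j) (blk lam i) \<longrightarrow> M $$ (i,j) = 0}"

lemma parLie_eq_block_zero_set:
  "parLie lam = block_zero_set (<) lam"
  unfolding parLie_def block_zero_set_def by simp
lemma nilLie_eq_block_zero_set:
  "nilLie lam = block_zero_set (\<le>) lam"
  unfolding nilLie_def block_zero_set_def by simp

lemma block_relation_append: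
  fixes R :: "nat \<Rightarrow> nat \<Rightarrow> bool"
  assumes Rlt: "\<And>a b. a < b \<Longrightarrow> R a b" and Rgt: "\<And>a b. b < a \<Longrightarrow> \<not> R a b"
    and Rsh: "\<And>a b c. R (c + a) (c + b) = R a b"
    and k: "k = sum_list al"
  shows "R (blk (al @ be) j) (blk (al @ be) i) \<longleftrightarrow>
    (if i < k then j < k \<and> R (blk al j) (blk al i) else j < k \<or> R (blk be (j - k)) (blk be (i - k)))"
proof (cases "i < k"; cases "j < k")
  assume "i < k" "\<not> j < k"
  then have "blk (al @ be) i < blk (al @ be) j"
    using blk_less_length[of i al] k by (simp add: blk_append)
  then show ?thesis using Rgt \<open>i < k\<close> \<open>\<not> j < k\<close> by auto
next
  assume "\<not> i < k" "j < k"
  then have "blk (al @ be) j < blk (al @ be) i"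
    using blk_less_length[of j al] k by (simp add: blk_append)
  then show ?thesis using Rlt \<open>j < k\<close> \<open>\<not> i < k\<close> by auto
qed (use k Rsh in \<open>simp_all add: blk_append\<close>)

lemma block_zero_set_append_iff:
  fixes R :: "nat \<Rightarrow> nat \<Rightarrow> bool"
  assumes Rlt: "\<And>a b. a < b \<Longrightarrow> R a b" and Rgt: "\<And>a b. b < a \<Longrightarrow> \<not> R a b"
    and Rsh: "\<And>a b c. R (c + a) (c + b) = R a b"
    and kl: "k = sum_list al" "l = sum_list be"
    and M: "(M::'a::zero mat) \<in> carrier_mat (k+l) (k+l)"
  shows "M \<in> block_zero_set R (al @ be) \<longleftrightarrow>
    ul_block k M \<in> block_zero_set R al \<and> lr_block k l M \<in> block_zero_set R be \<and> ll_block k l M = 0\<^sub>m l k"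
    (is "?lhs \<longleftrightarrow> ?ul \<and> ?lr \<and> ?ll")
proof -
  note rel = block_relation_append[where R=R, OF Rlt Rgt Rsh kl(1)]
  have lhs: "?lhs \<longleftrightarrow> (\<forall>i<k+l. \<forall>j<k+l. R (blk (al @ be) j) (blk (al @ be) i) \<longrightarrow> M $$ (i,j) = 0)"
    using M kl by (simp add: block_zero_set_def)
  have ul: "?ul \<longleftrightarrow> (\<forall>i<k. \<forall>j<k. R (blk al j) (blk al i) \<longrightarrow> M $$ (i,j) = 0)"
    using kl by (simp add: block_zero_set_def)
  have lr: "?lr \<longleftrightarrow> (\<forall>i<l. \<forall>j<l. R (blk be j) (blk be i) \<longrightarrow> M $$ (k+i,k+j) = 0)"
    using kl by (simp add: block_zero_set_def)
  have ll: "?ll \<longleftrightarrow> (\<forall>i<l. \<forall>j<k. M $$ (k+i,j) = 0)"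
  proof
    assume ?ll
    show "\<forall>i<l. \<forall>j<k. M $$ (k+i,j) = 0"
    proof (intro allI impI)
      fix i j assume "i < l" "j < k"
      then show "M $$ (k+i,j) = 0" using arg_cong[OF \<open>?ll\<close>, of "\<lambda>A. A $$ (i,j)"] by simp
    qed
  qed (auto intro!: eq_matI)
  show ?thesis
  proof
    assume L: ?lhs
    show "?ul \<and> ?lr \<and> ?ll"
      unfolding ul lr ll using L[unfolded lhs] rel by force
  next
    assume "?ul \<and> ?lr \<and> ?ll"
    then have U: "\<And>i j. i < k \<Longrightarrow> j < k \<Longrightarrow> R (blk al j) (blk al i) \<Longrightarrow> M $$ (i,j) = 0"
      and Lr: "\<And>i j. i < l \<Longrightarrow> j < l \<Longrightarrow> R (blk be j) (blk be i) \<Longrightarrow> M $$ (k+i,k+j) = 0"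
      and Ll: "\<And>i j. i < l \<Longrightarrow> j < k \<Longrightarrow> M $$ (k+i,j) = 0"
      unfolding ul lr ll by auto
    show ?lhs unfolding lhs
    proof (intro allI impI)
      fix i j assume ij: "i < k + l" "j < k + l" and r: "R (blk (al @ be) j) (blk (al @ be) i)"
      show "M $$ (i,j) = 0"
      proof (cases "i < k")
        case True
        then show ?thesis using r rel U by auto
      next
        case False
        then show ?thesis
          using r rel Lr[of "i - k" "j - k"] Ll[of "i - k" j] ij by (cases "j < k") auto
      qed
    qed
  qed
qed

lemma block_zero_set_carrier:
  "M \<in> block_zero_set R lam \<Longrightarrow> M \<in> carrier_mat (sum_list lam) (sum_list lam)"
  unfolding block_zero_set_def by auto

lemma finite_block_zero_set: "finite (block_zero_set R lam :: 'k::{finite,zero} mat set)"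
  by (rule finite_subset[OF _ finite_carrier_mat]) (auto simp: block_zero_set_def)

lemma block_zero_set_append:
  fixes R :: "nat \<Rightarrow> nat \<Rightarrow> bool"
  assumes Rlt: "\<And>a b. a < b \<Longrightarrow> R a b" and Rgt: "\<And>a b. b < a \<Longrightarrow> \<not> R a b"
    and Rsh: "\<And>a b c. R (c + a) (c + b) = R a b"
    and kl: "k = sum_list al" "l = sum_list be"
  shows "(block_zero_set R (al @ be) :: 'a::zero mat set) = (\<lambda>(A,D,B). four_block_mat A B (0\<^sub>m l k) D) ` (block_zero_set R al \<times> block_zero_set R be \<times> carrier_mat k l)"
proof (rule Set.set_eqI, rule iffI)
  fix M :: "'a mat" assume M: "M \<in> block_zero_set R (al @ be)"
  have Mc: "M \<in> carrier_mat (k+l) (k+l)" using block_zero_set_carrier[OF M] kl by simp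
  note e = block_zero_set_append_iff[where R=R, OF Rlt Rgt Rsh kl Mc]
  have "M = four_block_mat (ul_block k M) (ur_block k l M) (0\<^sub>m l k) (lr_block k l M)"
    using four_block_mat_blocks[OF Mc] M e by simp
  then show "M \<in> (\<lambda>(A,D,B). four_block_mat A B (0\<^sub>m l k) D) ` (block_zero_set R al \<times> block_zero_set R be \<times> carrier_mat k l)"
    using M e by (intro image_eqI[of _ _ "(ul_block k M, lr_block k l M, ur_block k l M)"]) auto
next
  fix M :: "'a mat" assume "M \<in> (\<lambda>(A,D,B). four_block_mat A B (0\<^sub>m l k) D) ` (block_zero_set R al \<times> block_zero_set R be \<times> carrier_mat k l)"
  then obtain A D B where M: "M = four_block_mat A B (0\<^sub>m l k) D" and A: "A \<in> block_zero_set R al"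
    and D: "D \<in> block_zero_set R be" and B: "B \<in> carrier_mat k l" by auto
  have Ac: "A \<in> carrier_mat k k" using block_zero_set_carrier[OF A] kl by simp
  have Dc: "D \<in> carrier_mat l l" using block_zero_set_carrier[OF D] kl by simp
  have Mc: "M \<in> carrier_mat (k+l) (k+l)" using M Ac Dc by simp
  note e = block_zero_set_append_iff[where R=R, OF Rlt Rgt Rsh kl Mc]
  have "ul_block k M \<in> block_zero_set R al \<and> lr_block k l M \<in> block_zero_set R be \<and> ll_block k l M = 0\<^sub>m l k"
    unfolding M using blocks_four_block_mat[OF Ac B zero_carrier_mat Dc] A D by simp
  then show "M \<in> block_zero_set R (al @ be)" using e by blast
qed

lemma inj_on_four_block_upper:
  "inj_on (\<lambda>(A,D,B). four_block_mat A B (0\<^sub>m l k) D) (carrier_mat k k \<times> carrier_mat l l \<times> carrier_mat k l)"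
proof (rule inj_onI)
  fix x y assume x: "x \<in> carrier_mat k k \<times> carrier_mat l l \<times> carrier_mat k l"
    and y: "y \<in> carrier_mat k k \<times> carrier_mat l l \<times> carrier_mat k l"
    and eq: "(\<lambda>(A,D,B). four_block_mat A B (0\<^sub>m l k) D) x = (\<lambda>(A,D,B). four_block_mat A B (0\<^sub>m l k) D) y"
  obtain A D B where xx: "x = (A,D,B)" by (cases x) auto
  obtain A' D' B' where yy: "y = (A',D',B')" by (cases y) auto
  have *: "A \<in> carrier_mat k k" "D \<in> carrier_mat l l" "B \<in> carrier_mat k l"
    "A' \<in> carrier_mat k k" "D' \<in> carrier_mat l l" "B' \<in> carrier_mat k l" using x y xx yy by auto
  have e: "four_block_mat A B (0\<^sub>m l k) D = four_block_mat A' B' (0\<^sub>m l k) D'" using eq xx yy by simp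
  have "A = A'" using blocks_four_block_mat(1)[OF *(1,3) zero_carrier_mat *(2)] blocks_four_block_mat(1)[OF *(4,6) zero_carrier_mat *(5)] e by metis
  moreover have "B = B'" using blocks_four_block_mat(2)[OF *(1,3) zero_carrier_mat *(2)] blocks_four_block_mat(2)[OF *(4,6) zero_carrier_mat *(5)] e by metis
  moreover have "D = D'" using blocks_four_block_mat(4)[OF *(1,3) zero_carrier_mat *(2)] blocks_four_block_mat(4)[OF *(4,6) zero_carrier_mat *(5)] e by metis
  ultimately show "x = y" using xx yy by simp
qed

lemma block_zero_set_subset_carrier:
  "k = sum_list al \<Longrightarrow> block_zero_set R al \<subseteq> carrier_mat k k"
  using block_zero_set_carrier by blast

lemma sum_block_zero_set_append:
  fixes R :: "nat \<Rightarrow> nat \<Rightarrow> bool" and phi :: "'k::{finite,zero} mat \<Rightarrow> 'b::comm_monoid_add"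
  assumes Rlt: "\<And>a b. a < b \<Longrightarrow> R a b" and Rgt: "\<And>a b. b < a \<Longrightarrow> \<not> R a b"
    and Rsh: "\<And>a b c. R (c + a) (c + b) = R a b"
    and kl: "k = sum_list al" "l = sum_list be"
  shows "(\<Sum>M\<in>block_zero_set R (al @ be). phi M) =
    (\<Sum>A\<in>block_zero_set R al. \<Sum>D\<in>block_zero_set R be. \<Sum>B\<in>carrier_mat k l. phi (four_block_mat A B (0\<^sub>m l k) D))"
    and "card (block_zero_set R (al @ be) :: 'k mat set) = card (block_zero_set R al :: 'k mat set) * card (block_zero_set R be :: 'k mat set) * card (carrier_mat k l :: 'k mat set)"
proof -
  have inj: "inj_on (\<lambda>(A,D,B). four_block_mat A B (0\<^sub>m l k) D) (block_zero_set R al \<times> block_zero_set R be \<times> carrier_mat k l)"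
    by (rule inj_on_subset[OF inj_on_four_block_upper]) (use block_zero_set_subset_carrier[OF kl(1)] block_zero_set_subset_carrier[OF kl(2)] in auto)
  have "(\<Sum>M\<in>block_zero_set R (al @ be). phi M) = (\<Sum>M\<in>(\<lambda>(A,D,B). four_block_mat A B (0\<^sub>m l k) D) ` (block_zero_set R al \<times> block_zero_set R be \<times> carrier_mat k l). phi M)"
    using block_zero_set_append[where R=R and 'a='k, OF Rlt Rgt Rsh kl] by simp
  also have "\<dots> = (\<Sum>x\<in>block_zero_set R al \<times> block_zero_set R be \<times> carrier_mat k l. phi ((\<lambda>(A,D,B). four_block_mat A B (0\<^sub>m l k) D) x))"
    by (rule sum.reindex[OF inj, unfolded comp_def])
  also have "\<dots> = (\<Sum>A\<in>block_zero_set R al. \<Sum>D\<in>block_zero_set R be. \<Sum>B\<in>carrier_mat k l. phi (four_block_mat A B (0\<^sub>m l k) D))"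
    by (simp add: sum.cartesian_product finite_block_zero_set finite_carrier_mat split_def)
  finally show "(\<Sum>M\<in>block_zero_set R (al @ be). phi M) =
    (\<Sum>A\<in>block_zero_set R al. \<Sum>D\<in>block_zero_set R be. \<Sum>B\<in>carrier_mat k l. phi (four_block_mat A B (0\<^sub>m l k) D))" .
  show "card (block_zero_set R (al @ be) :: 'k mat set) = card (block_zero_set R al :: 'k mat set) * card (block_zero_set R be :: 'k mat set) * card (carrier_mat k l :: 'k mat set)"
    using block_zero_set_append[where R=R and 'a='k, OF Rlt Rgt Rsh kl] card_image[OF inj] by (simp add: card_cartesian_product mult.assoc)
qed

lemma sum_nilLie_append:
  assumes kl: "k = sum_list al" "l = sum_list be"
  shows "(\<Sum>M\<in>nilLie (al @ be). phi M) =
    (\<Sum>A\<in>nilLie al. \<Sum>D\<in>nilLie be. \<Sum>B\<in>carrier_mat k l. phi (four_block_mat A B (0\<^sub>m l k) (D::'k::{finite,field} mat)))"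
    and "card (nilLie (al @ be) :: 'k mat set) = card (nilLie al :: 'k mat set) * card (nilLie be :: 'k mat set) * card (carrier_mat k l :: 'k mat set)"
  unfolding nilLie_eq_block_zero_set by (rule sum_block_zero_set_append[OF _ _ _ kl]; simp)+

lemma parLie_append_iff:
  assumes kl: "k = sum_list al" "l = sum_list be" and M: "(M::'k::{finite,field} mat) \<in> carrier_mat (k+l) (k+l)"
  shows "M \<in> parLie (al @ be) \<longleftrightarrow> ul_block k M \<in> parLie al \<and> lr_block k l M \<in> parLie be \<and> ll_block k l M = 0\<^sub>m l k"
  unfolding parLie_eq_block_zero_set by (rule block_zero_set_append_iff[OF _ _ _ kl M]; simp)

lemma parLie_carrier:
  "M \<in> parLie lam \<Longrightarrow> M \<in> carrier_mat (sum_list lam) (sum_list lam)"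
  unfolding parLie_def by auto

lemma nilLie_carrier:
  "M \<in> nilLie lam \<Longrightarrow> M \<in> carrier_mat (sum_list lam) (sum_list lam)"
  unfolding nilLie_def by auto

lemma four_block_mat_GLn_iff:
  assumes "A \<in> carrier_mat k k" "B \<in> carrier_mat k l" "D \<in> carrier_mat l l"
  shows "four_block_mat A B (0\<^sub>m l k) D \<in> GLn (k+l) \<longleftrightarrow> A \<in> GLn k \<and> (D::'k::{finite,field} mat) \<in> GLn l"
  unfolding GLn_iff_det det_four_block_mat_lower_left_zero[OF assms(1,2) refl assms(3)]
  using assms by auto

lemma parGrp_eq_parLie_GLn: "parGrp lam = parLie lam \<inter> GLn (sum_list lam)"
  unfolding parGrp_def GLn_def using parLie_carrier by blast

lemma card_parGrp_append:
  assumes kl: "k = sum_list al" "l = sum_list be"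
  shows "card (parGrp (al @ be) :: 'k::{finite,field} mat set) = card (parGrp al :: 'k mat set) * card (parGrp be :: 'k mat set) * card (carrier_mat k l :: 'k mat set)"
proof -
  let ?f = "(\<lambda>(A,D,B). four_block_mat A B (0\<^sub>m l k) D) :: 'k mat \<times> 'k mat \<times> 'k mat \<Rightarrow> 'k mat"
  have eq: "parGrp (al @ be) = ?f ` (parGrp al \<times> parGrp be \<times> carrier_mat k l)"
  proof -
    have z: "parLie (al @ be) = ?f ` (parLie al \<times> parLie be \<times> carrier_mat k l)"
      unfolding parLie_eq_block_zero_set by (rule block_zero_set_append[OF _ _ _ kl]; simp)
    show ?thesis unfolding parGrp_eq_parLie_GLn z
    proof (rule Set.set_eqI, rule iffI)
      fix M assume "M \<in> ?f ` (parLie al \<times> parLie be \<times> carrier_mat k l) \<inter> GLn (sum_list (al @ be))"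
      then obtain A D B where M: "M = four_block_mat A B (0\<^sub>m l k) D" "A \<in> block_zero_set (<) al" "D \<in> block_zero_set (<) be"
        "B \<in> carrier_mat k l" "M \<in> GLn (k+l)" using kl unfolding parLie_eq_block_zero_set by auto
      have c: "A \<in> carrier_mat k k" "D \<in> carrier_mat l l" using M block_zero_set_carrier kl by blast+
      have "A \<in> GLn k \<and> D \<in> GLn l" using four_block_mat_GLn_iff[OF c(1) M(4) c(2)] M by simp
      then show "M \<in> ?f ` ((parLie al \<inter> GLn (sum_list al)) \<times> (parLie be \<inter> GLn (sum_list be)) \<times> carrier_mat k l)"
        using M kl unfolding parLie_eq_block_zero_set by (intro image_eqI[of _ _ "(A,D,B)"]) auto
    next
      fix M assume "M \<in> ?f ` ((parLie al \<inter> GLn (sum_list al)) \<times> (parLie be \<inter> GLn (sum_list be)) \<times> carrier_mat k l)"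
      then obtain A D B where M: "M = four_block_mat A B (0\<^sub>m l k) D" "A \<in> block_zero_set (<) al" "D \<in> block_zero_set (<) be"
        "B \<in> carrier_mat k l" "A \<in> GLn k" "D \<in> GLn l" using kl unfolding parLie_eq_block_zero_set by auto
      have c: "A \<in> carrier_mat k k" "D \<in> carrier_mat l l" using M block_zero_set_carrier kl by blast+
      have "M \<in> GLn (k+l)" using four_block_mat_GLn_iff[OF c(1) M(4) c(2)] M by simp
      then show "M \<in> ?f ` (parLie al \<times> parLie be \<times> carrier_mat k l) \<inter> GLn (sum_list (al @ be))"
        using M kl unfolding parLie_eq_block_zero_set by (auto intro!: image_eqI[of _ _ "(A,D,B)"])
    qed
  qed
  have inj: "inj_on ?f (parGrp al \<times> parGrp be \<times> carrier_mat k l)"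
    by (rule inj_on_subset[OF inj_on_four_block_upper]) (use parLie_carrier kl in \<open>auto simp: parGrp_def\<close>)
  show ?thesis unfolding eq card_image[OF inj] by (simp add: card_cartesian_product mult.assoc)
qed

lemma levProj_append:
  assumes kl: "k = sum_list al" "l = sum_list be"
  shows "levProj (al @ be) M = four_block_mat (levProj al (ul_block k M)) (0\<^sub>m k l) (0\<^sub>m l k) (levProj be (lr_block k l M))"
proof (rule eq_matI)
  fix i j assume ij: "i < dim_row (four_block_mat (levProj al (ul_block k M)) (0\<^sub>m k l) (0\<^sub>m l k) (levProj be (lr_block k l M)))"
    "j < dim_col (four_block_mat (levProj al (ul_block k M)) (0\<^sub>m k l) (0\<^sub>m l k) (levProj be (lr_block k l M)))"
  have d: "dim_row (levProj al (ul_block k M)) = k" "dim_col (levProj al (ul_block k M)) = k"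
     "dim_row (levProj be (lr_block k l M)) = l" "dim_col (levProj be (lr_block k l M)) = l"
    unfolding levProj_def using kl by auto
  have ij': "i < k + l" "j < k + l" using ij d by auto
  show "levProj (al @ be) M $$ (i, j) = four_block_mat (levProj al (ul_block k M)) (0\<^sub>m k l) (0\<^sub>m l k) (levProj be (lr_block k l M)) $$ (i, j)"
  proof (cases "i < k"; cases "j < k")
    assume "i < k" "j < k" then show ?thesis using ij' d kl by (simp add: levProj_def blk_append)
  next
    assume a: "i < k" "\<not> j < k"
    have "blk al i < length al" using blk_less_length[of i al] a kl by simp
    then show ?thesis using a ij' d kl by (simp add: levProj_def blk_append)
  next
    assume a: "\<not> i < k" "j < k"
    have "blk al j < length al" using blk_less_length[of j al] a kl by simp
    then show ?thesis using a ij' d kl by (simp add: levProj_def blk_append)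
  next
    assume a: "\<not> i < k" "\<not> j < k"
    then show ?thesis using a ij' d kl by (simp add: levProj_def blk_append)
  qed
qed (use kl in \<open>auto simp: levProj_def\<close>)

lemma card_uniGrp_eq_nilLie:
  "card (uniGrp lam :: 'k::{finite,field} mat set) = card (nilLie lam :: 'k mat set)"
proof -
  let ?n = "sum_list lam"
  have eq: "(uniGrp lam :: 'k mat set) = (\<lambda>M. M + 1\<^sub>m ?n) ` nilLie lam"
  proof (rule Set.set_eqI, rule iffI)
    fix g :: "'k mat" assume g: "g \<in> uniGrp lam"
    have gc: "g \<in> carrier_mat ?n ?n" using g unfolding uniGrp_def by auto
    have "g - 1\<^sub>m ?n \<in> nilLie lam" using g gc unfolding uniGrp_def nilLie_def by auto
    moreover have "g = (g - 1\<^sub>m ?n) + 1\<^sub>m ?n" using gc by (intro eq_matI) auto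
    ultimately show "g \<in> (\<lambda>M. M + 1\<^sub>m ?n) ` nilLie lam" by blast
  next
    fix g :: "'k mat" assume "g \<in> (\<lambda>M. M + 1\<^sub>m ?n) ` nilLie lam"
    then obtain M where M: "M \<in> nilLie lam" "g = M + 1\<^sub>m ?n" by auto
    then show "g \<in> uniGrp lam" unfolding uniGrp_def nilLie_def by auto
  qed
  have inj: "inj_on (\<lambda>M. M + 1\<^sub>m ?n) (nilLie (lam) :: 'k mat set)"
  proof (rule inj_onI)
    fix A B :: "'k mat" assume A: "A \<in> nilLie lam" and B: "B \<in> nilLie lam" and e: "A + 1\<^sub>m ?n = B + 1\<^sub>m ?n"
    have Ac: "A \<in> carrier_mat ?n ?n" and Bc: "B \<in> carrier_mat ?n ?n" using A B nilLie_carrier by auto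
    show "A = B"
    proof (rule eq_matI)
      fix i j assume ij: "i < dim_row B" "j < dim_col B"
      have "(A + 1\<^sub>m ?n) $$ (i,j) = (B + 1\<^sub>m ?n) $$ (i,j)" using e by simp
      then show "A $$ (i,j) = B $$ (i,j)" using ij Ac Bc by simp
    qed (use Ac Bc in auto)
  qed
  show ?thesis unfolding eq card_image[OF inj] ..
qed

definition one_block :: "nat list \<Rightarrow> bool" where "one_block lam \<longleftrightarrow> (\<forall>i<sum_list lam. blk lam i = 0)"

lemma one_block_single: "one_block [k]" unfolding one_block_def by (simp add: blk_single)
lemma one_block_Nil: "one_block []" unfolding one_block_def by simp

lemma parLie_one_block:
  "one_block lam \<Longrightarrow> parLie lam = carrier_mat (sum_list lam) (sum_list lam)"
  unfolding one_block_def parLie_def by auto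

lemma nilLie_one_block:
  "one_block lam \<Longrightarrow> nilLie lam = {0\<^sub>m (sum_list lam) (sum_list lam)}"
  unfolding one_block_def nilLie_def by (auto intro!: eq_matI)

lemma parGrp_one_block: "one_block lam \<Longrightarrow> parGrp lam = GLn (sum_list lam)"
  unfolding parGrp_eq_parLie_GLn parLie_one_block by (auto simp: GLn_def)

lemma levProj_one_block:
  "one_block lam \<Longrightarrow> M \<in> carrier_mat (sum_list lam) (sum_list lam) \<Longrightarrow> levProj lam M = M"
  unfolding one_block_def levProj_def by (auto intro!: eq_matI)

lemma card_uniGrp_one_block:
  "one_block lam \<Longrightarrow> card (uniGrp lam :: 'k::{finite,field} mat set) = 1"
  unfolding card_uniGrp_eq_nilLie nilLie_one_block by simp

abbreviation diag_block :: "nat \<Rightarrow> nat \<Rightarrow> 'a::zero mat \<Rightarrow> 'a mat \<Rightarrow> 'a mat" where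
  "diag_block k l A D \<equiv> four_block_mat A (0\<^sub>m k l) (0\<^sub>m l k) D"

lemma mult_four_block_upper: fixes A :: "'a::comm_ring_1 mat"
  assumes "A \<in> carrier_mat k k" "B \<in> carrier_mat k l" "D \<in> carrier_mat l l"
    "A' \<in> carrier_mat k k" "B' \<in> carrier_mat k l" "D' \<in> carrier_mat l l"
  shows "four_block_mat A B (0\<^sub>m l k) D * four_block_mat A' B' (0\<^sub>m l k) D'
    = four_block_mat (A * A') (A * B' + B * D') (0\<^sub>m l k) (D * D')"
proof -
  have "four_block_mat A B (0\<^sub>m l k) D * four_block_mat A' B' (0\<^sub>m l k) D'
    = four_block_mat (A * A' + B * 0\<^sub>m l k) (A * B' + B * D') (0\<^sub>m l k * A' + D * 0\<^sub>m l k) (0\<^sub>m l k * B' + D * D')"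
    by (rule mult_four_block_mat) (use assms in auto)
  also have "B * 0\<^sub>m l k = 0\<^sub>m k k" using assms by (simp add: right_mult_zero_mat)
  also have "A * A' + 0\<^sub>m k k = A * A'" using assms by simp
  also have "0\<^sub>m l k * A' = 0\<^sub>m l k" using assms by (simp add: left_mult_zero_mat)
  also have "D * 0\<^sub>m l k = 0\<^sub>m l k" using assms by (simp add: right_mult_zero_mat)
  also have "0\<^sub>m l k * B' = 0\<^sub>m l l" using assms by (simp add: left_mult_zero_mat)
  also have "0\<^sub>m l l + D * D' = D * D'" using assms by simp
  finally show ?thesis by simp
qed

lemma mult_diag_block: fixes A :: "'a::comm_ring_1 mat"
  assumes "A \<in> carrier_mat k k" "D \<in> carrier_mat l l" "A' \<in> carrier_mat k k" "D' \<in> carrier_mat l l"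
  shows "diag_block k l A D * diag_block k l A' D' = diag_block k l (A * A') (D * D')"
proof -
  have "diag_block k l A D * diag_block k l A' D' = four_block_mat (A * A') (A * 0\<^sub>m k l + 0\<^sub>m k l * D') (0\<^sub>m l k) (D * D')"
    by (rule mult_four_block_upper) (use assms in auto)
  also have "A * 0\<^sub>m k l + 0\<^sub>m k l * D' = 0\<^sub>m k l" using assms by (simp add: right_mult_zero_mat left_mult_zero_mat)
  finally show ?thesis .
qed

lemma diag_block_GLn:
  assumes "h1 \<in> GLn k" "h2 \<in> GLn l"
  shows "diag_block k l h1 (h2::'k::{finite,field} mat) \<in> GLn (k+l)"
  using four_block_mat_GLn_iff[of h1 k "0\<^sub>m k l" l h2] assms GLn_carrier by auto

lemma mat_inv_diag_block: assumes "h1 \<in> GLn k" "h2 \<in> GLn l"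
  shows "mat_inv (diag_block k l h1 (h2::'k::{finite,field} mat)) = diag_block k l (mat_inv h1) (mat_inv h2)"
proof (rule mat_inv_unique[OF diag_block_GLn[OF assms]])
  show "diag_block k l (mat_inv h1) (mat_inv h2) \<in> carrier_mat (k+l) (k+l)" using mat_inv_GLn(1)[OF assms(1)] mat_inv_GLn(1)[OF assms(2)] by simp
  have "diag_block k l h1 h2 * diag_block k l (mat_inv h1) (mat_inv h2) = diag_block k l (h1 * mat_inv h1) (h2 * mat_inv h2)"
    by (rule mult_diag_block) (use mat_inv_GLn(1)[OF assms(1)] mat_inv_GLn(1)[OF assms(2)] GLn_carrier assms in auto)
  then show "diag_block k l h1 h2 * diag_block k l (mat_inv h1) (mat_inv h2) = 1\<^sub>m (k+l)"
    using mat_inv_GLn(2)[OF assms(1)] mat_inv_GLn(2)[OF assms(2)] by simp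
qed

lemma conjm_diag_block: assumes h: "h1 \<in> GLn k" "h2 \<in> GLn l"
  and c: "A \<in> carrier_mat k k" "B \<in> carrier_mat k l" "D \<in> carrier_mat l l"
  shows "conjm (diag_block k l h1 h2) (four_block_mat A B (0\<^sub>m l k) D) =
    four_block_mat (conjm h1 A) (h1 * B * mat_inv h2) (0\<^sub>m l k) (conjm (h2::'k::{finite,field} mat) D)"
proof -
  note G = GLn_carrier[OF h(1)] GLn_carrier[OF h(2)] mat_inv_GLn(1)[OF h(1)] mat_inv_GLn(1)[OF h(2)]
  have "diag_block k l h1 h2 * four_block_mat A B (0\<^sub>m l k) D = four_block_mat (h1 * A) (h1 * B + 0\<^sub>m k l * D) (0\<^sub>m l k) (h2 * D)"
    by (rule mult_four_block_upper) (use G c in auto)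
  also have "h1 * B + 0\<^sub>m k l * D = h1 * B" using G c by (simp add: left_mult_zero_mat)
  finally have 1: "diag_block k l h1 h2 * four_block_mat A B (0\<^sub>m l k) D = four_block_mat (h1 * A) (h1 * B) (0\<^sub>m l k) (h2 * D)" .
  have "four_block_mat (h1 * A) (h1 * B) (0\<^sub>m l k) (h2 * D) * diag_block k l (mat_inv h1) (mat_inv h2)
     = four_block_mat (h1 * A * mat_inv h1) (h1 * A * 0\<^sub>m k l + h1 * B * mat_inv h2) (0\<^sub>m l k) (h2 * D * mat_inv h2)"
    by (rule mult_four_block_upper) (use G c in auto)
  also have "h1 * A * 0\<^sub>m k l + h1 * B * mat_inv h2 = h1 * B * mat_inv h2" using G c by (simp add: right_mult_zero_mat)
  finally have 2: "four_block_mat (h1 * A) (h1 * B) (0\<^sub>m l k) (h2 * D) * diag_block k l (mat_inv h1) (mat_inv h2)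
     = four_block_mat (h1 * A * mat_inv h1) (h1 * B * mat_inv h2) (0\<^sub>m l k) (h2 * D * mat_inv h2)" .
  show ?thesis unfolding conjm_def mat_inv_diag_block[OF h] 1 2 by simp
qed

section \<open>Harish-Chandra restriction and induction\<close>

lemma HC_res_cong:
  assumes "\<And>w. w \<in> carrier_mat (sum_list lam) (sum_list lam) \<Longrightarrow> h w = h' w"
  shows "HC_res lam h = HC_res lam h'"
proof (rule ext)
  fix x show "HC_res lam h x = HC_res lam h' x"
    unfolding HC_res_def using assms nilLie_carrier by (auto intro!: sum.cong add_carrier_mat)
qed

lemma levProj_carrier: "levProj lam M \<in> carrier_mat (sum_list lam) (sum_list lam)"
  unfolding levProj_def by auto

lemma HC_ind_cong:
  assumes "\<And>w. w \<in> carrier_mat (sum_list lam) (sum_list lam) \<Longrightarrow> h w = h' w"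
  shows "HC_ind lam h = HC_ind lam h'"
proof (rule ext)
  fix x show "HC_ind lam h x = HC_ind lam h' x"
    unfolding HC_ind_def using assms levProj_carrier by (auto intro!: sum.cong)
qed

lemma HC_res_one_block: assumes "one_block lam"
  shows "HC_res lam h x = (if x \<in> carrier_mat (sum_list lam) (sum_list lam) then h x else (0::complex))"
  unfolding HC_res_def nilLie_one_block[OF assms] card_uniGrp_one_block[OF assms] by simp

lemma HC_ind_one_block: assumes "one_block lam" and n: "n = sum_list lam"
  shows "HC_ind lam h (x::'k::{finite,field} mat) = (if x \<in> carrier_mat n n then
     (1 / of_nat (card (GLn n :: 'k mat set))) * (\<Sum>g\<in>GLn n. h (conjm g x)) else (0::complex))"
proof (cases "x \<in> carrier_mat n n")
  case True
  have "{g \<in> GLn n. conjm g x \<in> parLie lam} = GLn n"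
    using conjm_carrier parLie_one_block[OF assms(1)] n by auto
  moreover have "\<And>g. g \<in> GLn n \<Longrightarrow> levProj lam (conjm g x) = conjm g x"
    using levProj_one_block[OF assms(1)] conjm_carrier n by auto
  ultimately show ?thesis using True unfolding HC_ind_def parGrp_one_block[OF assms(1)] n by simp
qed (use n in \<open>simp add: HC_ind_def\<close>)

lemma HC_ind_one_block_invariant: assumes "one_block lam" and n: "n = sum_list lam"
  and inv: "\<And>x g. x \<in> carrier_mat n n \<Longrightarrow> g \<in> GLn n \<Longrightarrow> h (conjm g x) = h x"
  shows "HC_ind lam h (x::'k::{finite,field} mat) = (if x \<in> carrier_mat n n then h x else (0::complex))"
proof (cases "x \<in> carrier_mat n n")
  case True
  have "(\<Sum>g\<in>GLn n. h (conjm g x)) = of_nat (card (GLn n :: 'k mat set)) * h x"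
    using inv[OF True] by simp
  moreover have "card (GLn n :: 'k mat set) \<noteq> 0" using card_GLn_pos[of n, where 'k='k] by linarith
  ultimately show ?thesis using HC_ind_one_block[OF assms(1,2), of h x] True by simp
qed (use HC_ind_one_block[OF assms(1,2), of h x] in simp)

lemma HC_ind_conjm:
  assumes g0: "g0 \<in> GLn n" and x: "x \<in> carrier_mat n n" and n: "n = sum_list lam"
  shows "HC_ind lam h (conjm g0 x) = HC_ind lam h (x::'k::{finite,field} mat)"
proof -
  have cx: "conjm g0 x \<in> carrier_mat n n" using conjm_carrier[OF g0] .
  have "(\<Sum>g\<in>{g \<in> GLn n. conjm g (conjm g0 x) \<in> parLie lam}. h (levProj lam (conjm g (conjm g0 x))))
      = (\<Sum>g\<in>{g \<in> GLn n. conjm g x \<in> parLie lam}. h (levProj lam (conjm g x)))"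
  proof (rule sum.reindex_bij_witness[where i="\<lambda>g. g * mat_inv g0" and j="\<lambda>g. g * g0"])
    fix g assume g: "g \<in> {g \<in> GLn n. conjm g (conjm g0 x) \<in> parLie lam}"
    show "g * g0 * mat_inv g0 = g" using mult_mat_inv_cancel_right(1)[OF g0 GLn_carrier] g by auto
    show "g * g0 \<in> {g \<in> GLn n. conjm g x \<in> parLie lam}"
      using g GLn_mult[OF _ g0] conjm_mult[OF _ g0 x] by auto
    show "h (levProj lam (conjm (g * g0) x)) = h (levProj lam (conjm g (conjm g0 x)))"
      using g conjm_mult[OF _ g0 x] by auto
  next
    fix g assume g: "g \<in> {g \<in> GLn n. conjm g x \<in> parLie lam}"
    show "g * mat_inv g0 * g0 = g" using mult_mat_inv_cancel_right(2)[OF g0 GLn_carrier] g by auto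
    have gi: "g * mat_inv g0 \<in> GLn n" using g GLn_mult[OF _ GLn_mat_inv[OF g0]] by auto
    have "conjm (g * mat_inv g0) (conjm g0 x) = conjm g x"
      using conjm_mult[OF gi g0 x, symmetric] mult_mat_inv_cancel_right(2)[OF g0 GLn_carrier] g by auto
    then show "g * mat_inv g0 \<in> {g \<in> GLn n. conjm g (conjm g0 x) \<in> parLie lam}" using gi g by auto
  qed
  then show ?thesis unfolding HC_ind_def using x cx n by simp
qed

lemma HC_ind_classfun: "HC_ind lam h \<in> classfun (sum_list lam)"
proof -
  have "\<forall>x. x \<notin> carrier_mat (sum_list lam) (sum_list lam) \<longrightarrow> HC_ind lam h x = 0"
    by (auto simp: HC_ind_def)
  moreover have "\<forall>x\<in>carrier_mat (sum_list lam) (sum_list lam). \<forall>g\<in>GLn (sum_list lam). HC_ind lam h (conjm g x) = HC_ind lam h x"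
    using HC_ind_conjm[OF _ _ refl] by blast
  ultimately show ?thesis unfolding classfun_def by blast
qed

section \<open>Transitivity along a two-block Levi subalgebra\<close>

lemma parLie_two_blocks_iff: assumes "(M::'k::{finite,field} mat) \<in> carrier_mat (k+l) (k+l)"
  shows "M \<in> parLie [k,l] \<longleftrightarrow> ll_block k l M = 0\<^sub>m l k"
  using parLie_append_iff[of k "[k]" l "[l]" M] assms by (simp add: parLie_one_block[OF one_block_single])

lemma nilLie_single: "nilLie [k] = {0\<^sub>m k k}"
  using nilLie_one_block[OF one_block_single] by simp

lemma card_nilLie_two_blocks:
  "card (nilLie [k,l] :: 'k::{finite,field} mat set) = card (carrier_mat k l :: 'k mat set)"
  using sum_nilLie_append(2)[of k "[k]" l "[l]"] by (simp add: nilLie_single)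

lemma card_parGrp_two_blocks: "card (parGrp [k,l] :: 'k::{finite,field} mat set) =
   card (GLn k :: 'k mat set) * card (GLn l :: 'k mat set) * card (carrier_mat k l :: 'k mat set)"
  using card_parGrp_append[of k "[k]" l "[l]"] by (simp add: parGrp_one_block[OF one_block_single])

lemma diag_block_add_four_block:
  assumes "x \<in> carrier_mat k k" "y \<in> carrier_mat l l" "A \<in> carrier_mat k k" "B \<in> carrier_mat k l" "D \<in> carrier_mat l l"
  shows "diag_block k l x y + four_block_mat A B (0\<^sub>m l k) D = four_block_mat (x + A) B (0\<^sub>m l k) (y + (D::'a::monoid_add mat))"
  by (rule eq_matI) (use assms in auto)

lemma coprod_eq_average:
  assumes "(w::'k::{finite,field} mat) \<in> carrier_mat k k" "v \<in> carrier_mat l l"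
  shows "coprod k l f w v = (1 / of_nat (card (carrier_mat k l :: 'k mat set))) *
     (\<Sum>B\<in>carrier_mat k l. f (four_block_mat w B (0\<^sub>m l k) v))"
proof -
  have "(\<Sum>y\<in>nilLie [k,l]. f (diag_block k l w v + y)) =
     (\<Sum>A\<in>nilLie [k]. \<Sum>D\<in>nilLie [l]. \<Sum>B\<in>carrier_mat k l. f (diag_block k l w v + four_block_mat A B (0\<^sub>m l k) D))"
    using sum_nilLie_append(1)[of k "[k]" l "[l]" "\<lambda>y. f (diag_block k l w v + y)"] by simp
  also have "\<dots> = (\<Sum>B\<in>carrier_mat k l. f (four_block_mat w B (0\<^sub>m l k) v))"
    unfolding nilLie_single using diag_block_add_four_block[OF assms zero_carrier_mat _ zero_carrier_mat] assms by simp
  finally show ?thesis unfolding coprod_def HC_res_def card_uniGrp_eq_nilLie card_nilLie_two_blocks using assms by simp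
qed

lemma HC_res_iterated:
  assumes kl: "k = sum_list al" "l = sum_list be" and x: "(x::'k::{finite,field} mat) \<in> carrier_mat k k"
    and y: "y \<in> carrier_mat l l"
  shows "HC_res al (\<lambda>w. HC_res be (\<lambda>v. coprod k l f w v) y) x = HC_res (al @ be) f (diag_block k l x y)"
proof -
  let ?a = "of_nat (card (nilLie al :: 'k mat set)) :: complex"
  let ?b = "of_nat (card (nilLie be :: 'k mat set)) :: complex"
  let ?c = "of_nat (card (carrier_mat k l :: 'k mat set)) :: complex"
  let ?S = "\<lambda>u u'. \<Sum>B\<in>carrier_mat k l. f (four_block_mat (x + u) B (0\<^sub>m l k) (y + u'))"
  have L: "HC_res al (\<lambda>w. HC_res be (\<lambda>v. coprod k l f w v) y) x =
     (1 / ?a) * (\<Sum>u\<in>nilLie al. (1 / ?b) * (\<Sum>u'\<in>nilLie be. (1 / ?c) * ?S u u'))"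
  proof -
    have "\<And>u u'. u \<in> nilLie al \<Longrightarrow> u' \<in> nilLie be \<Longrightarrow> coprod k l f (x + u) (y + u') = (1 / ?c) * ?S u u'"
      using coprod_eq_average nilLie_carrier kl x y by (metis add_carrier_mat)
    then show ?thesis unfolding HC_res_def card_uniGrp_eq_nilLie using x y kl nilLie_carrier
      by (auto intro!: sum.cong)
  qed
  have R: "HC_res (al @ be) f (diag_block k l x y) = (1 / (?a * ?b * ?c)) * (\<Sum>u\<in>nilLie al. \<Sum>u'\<in>nilLie be. ?S u u')"
  proof -
    have "(\<Sum>t\<in>nilLie (al @ be). f (diag_block k l x y + t)) =
       (\<Sum>A\<in>nilLie al. \<Sum>D\<in>nilLie be. \<Sum>B\<in>carrier_mat k l. f (diag_block k l x y + four_block_mat A B (0\<^sub>m l k) D))"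
      by (rule sum_nilLie_append(1)[OF kl])
    also have "\<dots> = (\<Sum>u\<in>nilLie al. \<Sum>u'\<in>nilLie be. ?S u u')"
    proof (intro sum.cong refl)
      fix A D B :: "'k mat" assume A: "A \<in> nilLie al" and D: "D \<in> nilLie be" and B: "B \<in> carrier_mat k l"
      have Ac: "A \<in> carrier_mat k k" using nilLie_carrier[OF A] kl by simp
      have Dc: "D \<in> carrier_mat l l" using nilLie_carrier[OF D] kl by simp
      show "f (diag_block k l x y + four_block_mat A B (0\<^sub>m l k) D) = f (four_block_mat (x + A) B (0\<^sub>m l k) (y + D))"
        using diag_block_add_four_block[OF x y Ac B Dc] by simp
    qed
    finally show ?thesis unfolding HC_res_def card_uniGrp_eq_nilLie sum_nilLie_append(2)[OF kl] using x y kl by simp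
  qed
  show ?thesis unfolding L R by (simp add: sum_distrib_left mult.assoc)
qed

lemma four_block_mat_parLie_append_iff: assumes kl: "k = sum_list al" "l = sum_list be"
  and c: "A \<in> carrier_mat k k" "B \<in> carrier_mat k l" "D \<in> carrier_mat l l"
  shows "four_block_mat A B (0\<^sub>m l k) (D::'k::{finite,field} mat) \<in> parLie (al @ be) \<longleftrightarrow> A \<in> parLie al \<and> D \<in> parLie be"
  using parLie_append_iff[OF kl, of "four_block_mat A B (0\<^sub>m l k) D"] c blocks_four_block_mat[OF c(1,2) zero_carrier_mat c(3)]
  by simp

lemma levProj_append_four_block_mat: assumes kl: "k = sum_list al" "l = sum_list be"
  and c: "A \<in> carrier_mat k k" "B \<in> carrier_mat k l" "D \<in> carrier_mat l l"
  shows "levProj (al @ be) (four_block_mat A B (0\<^sub>m l k) (D::'k::{finite,field} mat)) = diag_block k l (levProj al A) (levProj be D)"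
  using levProj_append[OF kl, of "four_block_mat A B (0\<^sub>m l k) D"] blocks_four_block_mat[OF c(1,2) zero_carrier_mat c(3)]
  by simp

lemma parLie_two_blocks_decomp: assumes "(M::'k::{finite,field} mat) \<in> parLie [k,l]"
  shows "M = four_block_mat (ul_block k M) (ur_block k l M) (0\<^sub>m l k) (lr_block k l M)"
proof -
  have Mc: "M \<in> carrier_mat (k+l) (k+l)" using parLie_carrier[OF assms] by simp
  show ?thesis using four_block_mat_blocks[OF Mc] parLie_two_blocks_iff[OF Mc] assms by simp
qed

lemma conjm_diag_block_parLie_two_blocks:
  assumes M: "(M::'k::{finite,field} mat) \<in> parLie [k,l]" and h: "h1 \<in> GLn k" "h2 \<in> GLn l"
  shows "conjm (diag_block k l h1 h2) M = four_block_mat (conjm h1 (ul_block k M))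
    (h1 * ur_block k l M * mat_inv h2) (0\<^sub>m l k) (conjm h2 (lr_block k l M))"
proof -
  have "conjm (diag_block k l h1 h2) M = conjm (diag_block k l h1 h2)
      (four_block_mat (ul_block k M) (ur_block k l M) (0\<^sub>m l k) (lr_block k l M))"
    by (rule arg_cong[OF parLie_two_blocks_decomp[OF M]])
  also have "\<dots> = four_block_mat (conjm h1 (ul_block k M))
      (h1 * ur_block k l M * mat_inv h2) (0\<^sub>m l k) (conjm h2 (lr_block k l M))"
    by (rule conjm_diag_block[OF h]) auto
  finally show ?thesis .
qed

lemma conjm_diag_block_parLie_append:
  assumes kl: "k = sum_list al" "l = sum_list be"
    and M: "(M::'k::{finite,field} mat) \<in> parLie [k,l]" and h: "h1 \<in> GLn k" "h2 \<in> GLn l"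
  shows "conjm (diag_block k l h1 h2) M \<in> parLie (al @ be) \<longleftrightarrow>
      conjm h1 (ul_block k M) \<in> parLie al \<and> conjm h2 (lr_block k l M) \<in> parLie be"
    and "levProj (al @ be) (conjm (diag_block k l h1 h2) M) =
      diag_block k l (levProj al (conjm h1 (ul_block k M))) (levProj be (conjm h2 (lr_block k l M)))"
proof -
  have c: "conjm h1 (ul_block k M) \<in> carrier_mat k k" "h1 * ur_block k l M * mat_inv h2 \<in> carrier_mat k l"
    "conjm h2 (lr_block k l M) \<in> carrier_mat l l"
    using conjm_carrier[OF h(1)] conjm_carrier[OF h(2)] GLn_carrier[OF h(1)] mat_inv_GLn(1)[OF h(2)] by auto
  note eq = conjm_diag_block_parLie_two_blocks[OF M h]
  show "conjm (diag_block k l h1 h2) M \<in> parLie (al @ be) \<longleftrightarrow>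
      conjm h1 (ul_block k M) \<in> parLie al \<and> conjm h2 (lr_block k l M) \<in> parLie be"
    unfolding eq by (rule four_block_mat_parLie_append_iff[OF kl c])
  show "levProj (al @ be) (conjm (diag_block k l h1 h2) M) =
      diag_block k l (levProj al (conjm h1 (ul_block k M))) (levProj be (conjm h2 (lr_block k l M)))"
    unfolding eq by (rule levProj_append_four_block_mat[OF kl c])
qed

lemma conjm_diag_block_parLie:
  assumes "(M::'k::{finite,field} mat) \<in> parLie [k,l]" "h1 \<in> GLn k" "h2 \<in> GLn l"
  shows "conjm (diag_block k l h1 h2) M \<in> parLie [k,l]"
  using conjm_diag_block_parLie_append(1)[of k "[k]" l "[l]", OF _ _ assms] conjm_carrier[OF assms(2)]
    conjm_carrier[OF assms(3)]
  by (simp add: parLie_one_block[OF one_block_single])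

lemma parLie_append_subset_two_blocks:
  assumes kl: "k = sum_list al" "l = sum_list be"
  shows "parLie (al @ be) \<subseteq> (parLie [k,l] :: 'k::{finite,field} mat set)"
proof
  fix M :: "'k mat" assume M: "M \<in> parLie (al @ be)"
  then have Mc: "M \<in> carrier_mat (k+l) (k+l)" using parLie_carrier kl by fastforce
  show "M \<in> parLie [k,l]"
    using parLie_append_iff[OF kl Mc] parLie_two_blocks_iff[OF Mc] M by simp
qed

lemma conjm_mat_inv_diag_block_mult_parLie:
  assumes kl: "k = sum_list al" "l = sum_list be" and z: "z \<in> carrier_mat (k+l) (k+l)"
    and g: "g \<in> GLn (k+l)" and gz: "conjm g z \<in> parLie (al @ be)"
    and h: "h1 \<in> GLn k" "(h2::'k::{finite,field} mat) \<in> GLn l"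
  shows "conjm (mat_inv (diag_block k l h1 h2) * g) z \<in> parLie [k,l]"
proof -
  have "conjm (mat_inv (diag_block k l h1 h2) * g) z = conjm (diag_block k l (mat_inv h1) (mat_inv h2)) (conjm g z)"
    unfolding mat_inv_diag_block[OF h, symmetric] by (rule conjm_mult[OF GLn_mat_inv[OF diag_block_GLn[OF h]] g z])
  then show ?thesis
    using conjm_diag_block_parLie[OF _ GLn_mat_inv[OF h(1)] GLn_mat_inv[OF h(2)]] gz
      parLie_append_subset_two_blocks[OF kl] by auto
qed

text \<open>The parabolic of al @ be is the intersection of that of [k,l] with the preimages of the
  parabolics of al and be; hence (g, h1, h2) \<mapsto> (diag(h1,h2) g, h1, h2) identifies the index set
  of the iterated induction with that of the direct one, times GL_k \<times> GL_l.\<close>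
lemma sum_parabolic_refinement:
  fixes H :: "'k::{finite,field} mat \<Rightarrow> 'a::comm_semiring_1"
  assumes kl: "k = sum_list al" "l = sum_list be" and z: "z \<in> carrier_mat (k+l) (k+l)"
  shows "(\<Sum>g\<in>{g \<in> GLn (k+l). conjm g z \<in> parLie [k,l]}.
            \<Sum>h1\<in>{h1 \<in> GLn k. conjm h1 (ul_block k (conjm g z)) \<in> parLie al}.
            \<Sum>h2\<in>{h2 \<in> GLn l. conjm h2 (lr_block k l (conjm g z)) \<in> parLie be}.
              H (diag_block k l (levProj al (conjm h1 (ul_block k (conjm g z))))
                                (levProj be (conjm h2 (lr_block k l (conjm g z))))))
    = of_nat (card (GLn k :: 'k mat set) * card (GLn l :: 'k mat set)) *
      (\<Sum>g\<in>{g \<in> GLn (k+l). conjm g z \<in> parLie (al @ be)}. H (levProj (al @ be) (conjm g z)))"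
proof -
  define A where "A = {g \<in> GLn (k+l). conjm g z \<in> parLie [k,l]}"
  define B where "B = {g \<in> GLn (k+l). conjm g z \<in> parLie (al @ be)}"
  define S1 where "S1 g = {h1 \<in> GLn k. conjm h1 (ul_block k (conjm g z)) \<in> parLie al}" for g
  define S2 where "S2 g = {h2 \<in> GLn l. conjm h2 (lr_block k l (conjm g z)) \<in> parLie be}" for g
  define Psi where "Psi g h1 h2 = H (diag_block k l (levProj al (conjm h1 (ul_block k (conjm g z))))
    (levProj be (conjm h2 (lr_block k l (conjm g z)))))" for g h1 h2
  define Phi where "Phi g = H (levProj (al @ be) (conjm g z))" for g
  define fwd :: "'k mat \<times> 'k mat \<times> 'k mat \<Rightarrow> 'k mat \<times> 'k mat \<times> 'k mat" where "fwd = (\<lambda>(g, h1, h2). (diag_block k l h1 h2 * g, h1, h2))"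
  define bwd :: "'k mat \<times> 'k mat \<times> 'k mat \<Rightarrow> 'k mat \<times> 'k mat \<times> 'k mat" where "bwd = (\<lambda>(g, h1, h2). (mat_inv (diag_block k l h1 h2) * g, h1, h2))"
  have fin: "finite A" "finite (S1 g)" "finite (S2 g)" for g
    unfolding A_def S1_def S2_def by (auto intro: finite_subset[OF _ finite_GLn])
  have "(\<Sum>g\<in>A. \<Sum>h1\<in>S1 g. \<Sum>h2\<in>S2 g. Psi g h1 h2) = (\<Sum>g\<in>A. \<Sum>(h1, h2)\<in>S1 g \<times> S2 g. Psi g h1 h2)"
    by (simp add: sum.cartesian_product)
  also have "\<dots> = (\<Sum>(g, h1, h2)\<in>Sigma A (\<lambda>g. S1 g \<times> S2 g). Psi g h1 h2)"
    by (rule sum.Sigma) (use fin in auto)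
  also have "\<dots> = (\<Sum>(g, h1, h2)\<in>B \<times> (GLn k :: 'k mat set) \<times> (GLn l :: 'k mat set). Phi g)"
  proof (rule sum.reindex_bij_witness[where j=fwd and i=bwd])
    fix p assume "p \<in> Sigma A (\<lambda>g. S1 g \<times> S2 g)"
    then obtain g h1 h2 where p: "p = (g, h1, h2)" and g: "g \<in> GLn (k+l)" and gA: "conjm g z \<in> parLie [k,l]"
      and h: "h1 \<in> GLn k" "h2 \<in> GLn l" and hS: "h1 \<in> S1 g" "h2 \<in> S2 g"
      unfolding A_def S1_def S2_def by auto
    have d: "diag_block k l h1 h2 \<in> GLn (k+l)" by (rule diag_block_GLn[OF h])
    note C = conjm_diag_block_parLie_append[OF kl gA h] and dg = conjm_mult[OF d g z]
    show "bwd (fwd p) = p"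
      using mat_inv_mult_cancel_left(1)[OF d GLn_carrier[OF g]] unfolding p fwd_def bwd_def by simp
    show "fwd p \<in> B \<times> GLn k \<times> GLn l"
      using C(1) hS h GLn_mult[OF d g] dg unfolding p fwd_def B_def S1_def S2_def by simp
    show "(case fwd p of (g, h1, h2) \<Rightarrow> Phi g) = (case p of (g, h1, h2) \<Rightarrow> Psi g h1 h2)"
      using C(2) dg unfolding p fwd_def Phi_def Psi_def by simp
  next
    fix q assume "q \<in> B \<times> (GLn k :: 'k mat set) \<times> (GLn l :: 'k mat set)"
    then obtain g' h1 h2 where q: "q = (g', h1, h2)" and g': "g' \<in> GLn (k+l)"
      and gB: "conjm g' z \<in> parLie (al @ be)" and h: "h1 \<in> GLn k" "h2 \<in> GLn l"
      unfolding B_def by auto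
    have d: "diag_block k l h1 h2 \<in> GLn (k+l)" by (rule diag_block_GLn[OF h])
    define g where "g = mat_inv (diag_block k l h1 h2) * g'"
    have g: "g \<in> GLn (k+l)" unfolding g_def by (rule GLn_mult[OF GLn_mat_inv[OF d] g'])
    have dg: "diag_block k l h1 h2 * g = g'"
      unfolding g_def by (rule mat_inv_mult_cancel_left(2)[OF d GLn_carrier[OF g']])
    have gA: "conjm g z \<in> parLie [k,l]"
      unfolding g_def by (rule conjm_mat_inv_diag_block_mult_parLie[OF kl z g' gB h])
    have "conjm (diag_block k l h1 h2) (conjm g z) \<in> parLie (al @ be)"
      using gB conjm_mult[OF d g z] dg by simp
    then show "bwd q \<in> Sigma A (\<lambda>g. S1 g \<times> S2 g)"
      using conjm_diag_block_parLie_append(1)[OF kl gA h] g gA h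
      unfolding q bwd_def A_def S1_def S2_def by (simp add: g_def[symmetric])
    show "fwd (bwd q) = q" using dg unfolding q bwd_def fwd_def g_def by simp
  qed
  also have "\<dots> = (\<Sum>g\<in>B. \<Sum>h\<in>(GLn k :: 'k mat set) \<times> (GLn l :: 'k mat set). Phi g)"
    unfolding sum.cartesian_product by (simp add: split_def)
  also have "\<dots> = of_nat (card (GLn k :: 'k mat set) * card (GLn l :: 'k mat set)) * (\<Sum>g\<in>B. Phi g)"
    by (simp add: card_cartesian_product sum_distrib_left)
  finally show ?thesis unfolding A_def B_def S1_def S2_def Psi_def Phi_def .
qed

lemma HC_ind_iterated:
  assumes kl: "k = sum_list al" "l = sum_list be"
  shows "hprod k l (\<lambda>x y. HC_ind al (\<lambda>w. HC_ind be (\<lambda>v. H (diag_block k l w v)) y) x) z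
    = HC_ind (al @ be) H (z::'k::{finite,field} mat)"
proof (cases "z \<in> carrier_mat (k+l) (k+l)")
  case False
  then show ?thesis using kl by (simp add: hprod_def HC_ind_def)
next
  case True
  define c where "c S = (of_nat (card S) :: complex)" for S :: "'k mat set"
  have "ul_block k M = mat k k (\<lambda>(i,j). M $$ (i,j))" "lr_block k l M = mat l l (\<lambda>(i,j). M $$ (k+i,k+j))"
    for M :: "'k mat"
    by (simp_all add: ul_block_def lr_block_def)
  then have "hprod k l (\<lambda>x y. HC_ind al (\<lambda>w. HC_ind be (\<lambda>v. H (diag_block k l w v)) y) x) z
    = 1 / (c (parGrp [k,l]) * c (parGrp al) * c (parGrp be)) *
      (\<Sum>g\<in>{g \<in> GLn (k+l). conjm g z \<in> parLie [k,l]}.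
         \<Sum>h1\<in>{h1 \<in> GLn k. conjm h1 (ul_block k (conjm g z)) \<in> parLie al}.
         \<Sum>h2\<in>{h2 \<in> GLn l. conjm h2 (lr_block k l (conjm g z)) \<in> parLie be}.
           H (diag_block k l (levProj al (conjm h1 (ul_block k (conjm g z))))
                             (levProj be (conjm h2 (lr_block k l (conjm g z))))))"
    unfolding hprod_def HC_ind_def c_def using True kl by (simp add: sum_distrib_left mult.assoc)
  also have "\<dots> = c (GLn k) * c (GLn l) / (c (parGrp [k,l]) * c (parGrp al) * c (parGrp be)) *
      (\<Sum>g\<in>{g \<in> GLn (k+l). conjm g z \<in> parLie (al @ be)}. H (levProj (al @ be) (conjm g z)))"
    unfolding sum_parabolic_refinement[OF kl True] c_def by simp
  also have "\<dots> = HC_ind (al @ be) H z"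
    using True kl card_GLn_pos[of k, where 'k='k] card_GLn_pos[of l, where 'k='k]
    unfolding HC_ind_def c_def card_parGrp_two_blocks card_parGrp_append[OF kl] by (simp add: field_simps)
  finally show ?thesis .
qed

lemma coprod_conjm:
  assumes f: "f \<in> classfun (k+l)" and h: "h1 \<in> GLn k" "h2 \<in> GLn l"
    and x: "(x::'k::{finite,field} mat) \<in> carrier_mat k k" and y: "y \<in> carrier_mat l l"
  shows "coprod k l f (conjm h1 x) (conjm h2 y) = coprod k l f x y"
proof -
  have "(\<Sum>B\<in>carrier_mat k l. f (four_block_mat (conjm h1 x) B (0\<^sub>m l k) (conjm h2 y)))
      = (\<Sum>B\<in>carrier_mat k l. f (four_block_mat x B (0\<^sub>m l k) y))"
  proof (rule sum.reindex_bij_witness[where j="\<lambda>B. mat_inv h1 * B * h2" and i="\<lambda>B. h1 * B * mat_inv h2"])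
    fix B :: "'k mat" assume B: "B \<in> carrier_mat k l"
    show "h1 * (mat_inv h1 * B * h2) * mat_inv h2 = B"
      using mat_inv_sandwich[OF GLn_mat_inv[OF h(1)] GLn_mat_inv[OF h(2)] B] h by (simp add: mat_inv_mat_inv)
    show "mat_inv h1 * (h1 * B * mat_inv h2) * h2 = B" by (rule mat_inv_sandwich[OF h B])
    show "mat_inv h1 * B * h2 \<in> carrier_mat k l" "h1 * B * mat_inv h2 \<in> carrier_mat k l"
      using B mat_inv_GLn(1)[OF h(1)] mat_inv_GLn(1)[OF h(2)] GLn_carrier[OF h(1)] GLn_carrier[OF h(2)] by auto
    have "four_block_mat (conjm h1 x) B (0\<^sub>m l k) (conjm h2 y)
        = conjm (diag_block k l h1 h2) (four_block_mat x (mat_inv h1 * B * h2) (0\<^sub>m l k) y)"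
      using conjm_diag_block[OF h x \<open>mat_inv h1 * B * h2 \<in> carrier_mat k l\<close> y]
        \<open>h1 * (mat_inv h1 * B * h2) * mat_inv h2 = B\<close> by simp
    then show "f (four_block_mat x (mat_inv h1 * B * h2) (0\<^sub>m l k) y)
        = f (four_block_mat (conjm h1 x) B (0\<^sub>m l k) (conjm h2 y))"
      using f diag_block_GLn[OF h] x y \<open>mat_inv h1 * B * h2 \<in> carrier_mat k l\<close>
      unfolding classfun_def by simp
  qed
  then show ?thesis
    unfolding coprod_eq_average[OF x y] coprod_eq_average[OF conjm_carrier[OF h(1)] conjm_carrier[OF h(2)]]
    by simp
qed

lemma coprod_conjm_left: assumes f: "f \<in> classfun (k+l)" and h: "h1 \<in> GLn k"
  and x: "(x::'k::{finite,field} mat) \<in> carrier_mat k k" and y: "y \<in> carrier_mat l l"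
  shows "coprod k l f (conjm h1 x) y = coprod k l f x y"
  using coprod_conjm[OF f h GLn_one x y] conjm_one[OF y] by simp

lemma coprod_conjm_right: assumes f: "f \<in> classfun (k+l)" and h: "h2 \<in> GLn l"
  and x: "(x::'k::{finite,field} mat) \<in> carrier_mat k k" and y: "y \<in> carrier_mat l l"
  shows "coprod k l f x (conjm h2 y) = coprod k l f x y"
  using coprod_conjm[OF f GLn_one h x y] conjm_one[OF x] by simp

lemma hprod_cong:
  assumes "\<And>x y. x \<in> carrier_mat k k \<Longrightarrow> y \<in> carrier_mat l l \<Longrightarrow> F x y = F' x y"
  shows "hprod k l F z = hprod k l F' z"
  unfolding hprod_def using assms by (auto intro!: sum.cong)

text \<open>A one-block factor be is inert on class functions, so only the transitivity of
  restriction and induction remains.\<close>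
lemma hprod_HC_ind_res_left:
  assumes f: "f \<in> classfun (k+l)" and kl: "k = sum_list al" "l = sum_list be" and be: "one_block be"
  shows "hprod k l (\<lambda>x y. HC_ind al (HC_res al (\<lambda>x'. coprod k l f x' y)) x) z
     = HC_ind (al @ be) (HC_res (al @ be) f) (z::'k::{finite,field} mat)"
proof -
  define H where "H = HC_res (al @ be) f"
  have key: "H (diag_block k l w v) = HC_res al (\<lambda>w'. coprod k l f w' v) w"
    if w: "w \<in> carrier_mat k k" and v: "v \<in> carrier_mat l l" for w v :: "'k mat"
  proof -
    have "H (diag_block k l w v) = HC_res al (\<lambda>w'. HC_res be (\<lambda>v'. coprod k l f w' v') v) w"
      unfolding H_def by (rule HC_res_iterated[OF kl w v, symmetric])
    also have "\<dots> = HC_res al (\<lambda>w'. coprod k l f w' v) w"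
      by (rule fun_cong[OF HC_res_cong]) (use v kl in \<open>simp add: HC_res_one_block[OF be]\<close>)
    finally show ?thesis .
  qed
  have inv: "H (diag_block k l w (conjm g v)) = H (diag_block k l w v)"
    if w: "w \<in> carrier_mat k k" and v: "v \<in> carrier_mat l l" and g: "g \<in> GLn l" for w v g :: "'k mat"
  proof -
    have cv: "conjm g v \<in> carrier_mat l l" using conjm_carrier[OF g] .
    show ?thesis unfolding key[OF w v] key[OF w cv]
      by (rule fun_cong[OF HC_res_cong]) (use coprod_conjm_right[OF f g _ v] kl in simp)
  qed
  have inner: "HC_ind be (\<lambda>v. H (diag_block k l w v)) y = H (diag_block k l w y)"
    if w: "w \<in> carrier_mat k k" and y: "y \<in> carrier_mat l l" for w y :: "'k mat"
    using HC_ind_one_block_invariant[OF be kl(2), of "\<lambda>v. H (diag_block k l w v)" y] inv[OF w] y by simp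
  have "hprod k l (\<lambda>x y. HC_ind al (HC_res al (\<lambda>x'. coprod k l f x' y)) x) z
      = hprod k l (\<lambda>x y. HC_ind al (\<lambda>w. HC_ind be (\<lambda>v. H (diag_block k l w v)) y) x) z"
  proof (rule hprod_cong)
    fix x y :: "'k mat" assume x: "x \<in> carrier_mat k k" and y: "y \<in> carrier_mat l l"
    show "HC_ind al (HC_res al (\<lambda>x'. coprod k l f x' y)) x = HC_ind al (\<lambda>w. HC_ind be (\<lambda>v. H (diag_block k l w v)) y) x"
      by (rule fun_cong[OF HC_ind_cong]) (use inner key y kl in simp)
  qed
  also have "\<dots> = HC_ind (al @ be) H z" by (rule HC_ind_iterated[OF kl])
  finally show ?thesis unfolding H_def .
qed

lemma hprod_HC_ind_res_right:
  assumes f: "f \<in> classfun (k+l)" and kl: "k = sum_list al" "l = sum_list be" and al: "one_block al"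
  shows "hprod k l (\<lambda>x y. HC_ind be (HC_res be (\<lambda>y'. coprod k l f x y')) y) z
     = HC_ind (al @ be) (HC_res (al @ be) f) (z::'k::{finite,field} mat)"
proof -
  define H where "H = HC_res (al @ be) f"
  have key: "H (diag_block k l w v) = HC_res be (\<lambda>v'. coprod k l f w v') v"
    if w: "w \<in> carrier_mat k k" and v: "v \<in> carrier_mat l l" for w v :: "'k mat"
  proof -
    have "H (diag_block k l w v) = HC_res al (\<lambda>w'. HC_res be (\<lambda>v'. coprod k l f w' v') v) w"
      unfolding H_def by (rule HC_res_iterated[OF kl w v, symmetric])
    also have "\<dots> = HC_res be (\<lambda>v'. coprod k l f w v') v"
      using w kl by (simp add: HC_res_one_block[OF al])
    finally show ?thesis .
  qed
  have inv: "HC_ind be (\<lambda>v. H (diag_block k l (conjm g w) v)) y = HC_ind be (\<lambda>v. H (diag_block k l w v)) y"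
    if w: "w \<in> carrier_mat k k" and g: "g \<in> GLn k" for w g y :: "'k mat"
  proof -
    have cw: "conjm g w \<in> carrier_mat k k" using conjm_carrier[OF g] .
    have "\<And>v. v \<in> carrier_mat l l \<Longrightarrow> H (diag_block k l (conjm g w) v) = H (diag_block k l w v)"
    proof -
      fix v :: "'k mat" assume v: "v \<in> carrier_mat l l"
      show "H (diag_block k l (conjm g w) v) = H (diag_block k l w v)" unfolding key[OF w v] key[OF cw v]
        by (rule fun_cong[OF HC_res_cong]) (use coprod_conjm_left[OF f g w] kl in simp)
    qed
    then show ?thesis by (intro fun_cong[OF HC_ind_cong]) (use kl in simp)
  qed
  have "hprod k l (\<lambda>x y. HC_ind be (HC_res be (\<lambda>y'. coprod k l f x y')) y) z
      = hprod k l (\<lambda>x y. HC_ind al (\<lambda>w. HC_ind be (\<lambda>v. H (diag_block k l w v)) y) x) z"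
  proof (rule hprod_cong)
    fix x y :: "'k mat" assume x: "x \<in> carrier_mat k k" and y: "y \<in> carrier_mat l l"
    have "HC_ind al (\<lambda>w. HC_ind be (\<lambda>v. H (diag_block k l w v)) y) x = HC_ind be (\<lambda>v. H (diag_block k l x v)) y"
      using HC_ind_one_block_invariant[OF al kl(1), of "\<lambda>w. HC_ind be (\<lambda>v. H (diag_block k l w v)) y" x] inv x by simp
    also have "\<dots> = HC_ind be (HC_res be (\<lambda>y'. coprod k l f x y')) y"
      by (rule fun_cong[OF HC_ind_cong]) (use key[OF x] kl in simp)
    finally show "HC_ind be (HC_res be (\<lambda>y'. coprod k l f x y')) y = HC_ind al (\<lambda>w. HC_ind be (\<lambda>v. H (diag_block k l w v)) y) x" by simp
  qed
  also have "\<dots> = HC_ind (al @ be) H z" by (rule HC_ind_iterated[OF kl])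
  finally show ?thesis unfolding H_def .
qed

section \<open>Compositions\<close>

definition single_comp :: "nat \<Rightarrow> nat list" where
  "single_comp l = (if l = 0 then [] else [l])"

lemma sum_list_single_comp[simp]: "sum_list (single_comp l) = l"
  unfolding single_comp_def by simp

lemma one_block_single_comp: "one_block (single_comp l)"
  unfolding single_comp_def using one_block_Nil one_block_single by simp

lemma length_composition_le: "lam \<in> compositions n \<Longrightarrow> length lam \<le> n"
  unfolding compositions_def
proof (induction lam arbitrary: n)
  case (Cons a lam)
  then show ?case by force
qed simp

lemma finite_compositions: "finite (compositions n)"
proof (rule finite_subset)
  show "compositions n \<subseteq> {xs. set xs \<subseteq> {0..n} \<and> length xs \<le> n}"
    using length_composition_le member_le_sum_list by (fastforce simp: compositions_def)
  show "finite {xs. set xs \<subseteq> {0..n} \<and> length xs \<le> n}"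
    by (rule finite_lists_length_le) simp
qed

lemma compositions_0: "compositions 0 = {[]}"
proof -
  have "xs = []" if "\<forall>x\<in>set xs. 0 < x" "\<forall>n\<in>set xs. n = 0" for xs :: "nat list"
    using that by (cases xs) auto
  then show ?thesis unfolding compositions_def by (auto simp: sum_list_eq_0_iff)
qed

lemma bij_betw_compositions_snoc:
  assumes "0 < n"
  shows "bij_betw (\<lambda>p. snd p @ [n - fst p]) (SIGMA k:{..<n}. compositions k) (compositions n)"
proof (rule bij_betw_byWitness[where f'="\<lambda>nu. (n - last nu, butlast nu)"])
  have last: "nu \<noteq> [] \<and> 0 < last nu \<and> sum_list (butlast nu) + last nu = n" if "nu \<in> compositions n" for nu
    using that assms unfolding compositions_def by (cases nu rule: rev_cases) auto
  show "\<forall>p\<in>SIGMA k:{..<n}. compositions k.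
      (n - last (snd p @ [n - fst p]), butlast (snd p @ [n - fst p])) = p"
    by (auto simp: prod_eq_iff)
  show "\<forall>nu\<in>compositions n. snd (n - last nu, butlast nu) @ [n - fst (n - last nu, butlast nu)] = nu"
  proof
    fix nu assume "nu \<in> compositions n"
    from last[OF this] have "n - (n - last nu) = last nu" "nu \<noteq> []" by auto
    then show "snd (n - last nu, butlast nu) @ [n - fst (n - last nu, butlast nu)] = nu" by simp
  qed
  show "(\<lambda>p. snd p @ [n - fst p]) ` (SIGMA k:{..<n}. compositions k) \<subseteq> compositions n"
    unfolding compositions_def by auto
  show "(\<lambda>nu. (n - last nu, butlast nu)) ` compositions n \<subseteq> (SIGMA k:{..<n}. compositions k)"
  proof
    fix p assume "p \<in> (\<lambda>nu. (n - last nu, butlast nu)) ` compositions n"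
    then obtain nu where p: "p = (n - last nu, butlast nu)" and nu: "nu \<in> compositions n" by blast
    have "\<forall>a\<in>set (butlast nu). 0 < a" using nu in_set_butlastD unfolding compositions_def by fast
    then show "p \<in> (SIGMA k:{..<n}. compositions k)"
      using last[OF nu] unfolding p compositions_def by auto
  qed
qed

lemma bij_betw_compositions_Cons:
  assumes "0 < n"
  shows "bij_betw (\<lambda>p. fst p # snd p) (SIGMA k:{1..n}. compositions (n - k)) (compositions n)"
proof (rule bij_betw_byWitness[where f'="\<lambda>nu. (hd nu, tl nu)"])
  have hd: "nu = hd nu # tl nu \<and> 0 < hd nu \<and> hd nu + sum_list (tl nu) = n \<and> (\<forall>a\<in>set (tl nu). 0 < a)"
    if "nu \<in> compositions n" for nu
    using that assms unfolding compositions_def by (cases nu) auto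
  show "\<forall>p\<in>SIGMA k:{1..n}. compositions (n - k). (hd (fst p # snd p), tl (fst p # snd p)) = p"
    by simp
  show "\<forall>nu\<in>compositions n. fst (hd nu, tl nu) # snd (hd nu, tl nu) = nu"
    using hd by simp
  show "(\<lambda>p. fst p # snd p) ` (SIGMA k:{1..n}. compositions (n - k)) \<subseteq> compositions n"
    unfolding compositions_def by auto
  show "(\<lambda>nu. (hd nu, tl nu)) ` compositions n \<subseteq> (SIGMA k:{1..n}. compositions (n - k))"
    using hd unfolding compositions_def by fastforce
qed

text \<open>Splitting off the last part of a composition: all terms cancel except the one for the
  empty composition.\<close>
lemma alternating_sum_compositions_snoc:
  fixes Phi :: "nat list \<Rightarrow> 'a::comm_ring_1"
  shows "(\<Sum>k\<in>{0..n}. \<Sum>al\<in>compositions k. (-1) ^ length al * Phi (al @ single_comp (n - k)))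
    = (if n = 0 then Phi [] else 0)"
proof (cases "n = 0")
  case True
  then show ?thesis by (simp add: compositions_0 single_comp_def)
next
  case False
  have "(\<Sum>k<n. \<Sum>al\<in>compositions k. (-1) ^ length al * Phi (al @ single_comp (n - k)))
      = (\<Sum>p\<in>(SIGMA k:{..<n}. compositions k). - ((-1) ^ length (snd p @ [n - fst p]) * Phi (snd p @ [n - fst p])))"
    by (subst sum.Sigma) (auto simp: finite_compositions single_comp_def split_def intro!: sum.cong)
  also have "\<dots> = - (\<Sum>nu\<in>compositions n. (-1) ^ length nu * Phi nu)"
    using sum.reindex_bij_betw[OF bij_betw_compositions_snoc, of n "\<lambda>nu. - ((-1) ^ length nu * Phi nu)"] False
    by (simp add: sum_negf)
  finally show ?thesis
    using False by (simp add: atLeast0AtMost lessThan_Suc_atMost[symmetric] single_comp_def)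
qed

lemma alternating_sum_compositions_Cons:
  fixes Phi :: "nat list \<Rightarrow> 'a::comm_ring_1"
  shows "(\<Sum>k\<in>{0..n}. \<Sum>be\<in>compositions (n - k). (-1) ^ length be * Phi (single_comp k @ be))
    = (if n = 0 then Phi [] else 0)"
proof (cases "n = 0")
  case True
  then show ?thesis by (simp add: compositions_0 single_comp_def)
next
  case False
  have "(\<Sum>k\<in>{1..n}. \<Sum>be\<in>compositions (n - k). (-1) ^ length be * Phi (single_comp k @ be))
      = (\<Sum>p\<in>(SIGMA k:{1..n}. compositions (n - k)). - ((-1) ^ length (fst p # snd p) * Phi (fst p # snd p)))"
    by (subst sum.Sigma) (auto simp: finite_compositions single_comp_def split_def intro!: sum.cong)
  also have "\<dots> = - (\<Sum>nu\<in>compositions n. (-1) ^ length nu * Phi nu)"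
    using sum.reindex_bij_betw[OF bij_betw_compositions_Cons, of n "\<lambda>nu. - ((-1) ^ length nu * Phi nu)"] False
    by (simp add: sum_negf)
  moreover have "{0..n} = insert 0 {1..n}" by auto
  ultimately show ?thesis using False by (simp add: single_comp_def)
qed

section \<open>The signed duality is the antipode\<close>

definition signed_duality :: "nat \<Rightarrow> ('k::{finite,field} mat \<Rightarrow> complex) \<Rightarrow> 'k mat \<Rightarrow> complex" where
  "signed_duality n f x = (-1) ^ n * duality n f x"

lemma neg_one_power_diff:
  assumes "m \<le> k" shows "(-1::'a::comm_ring_1) ^ k * (-1) ^ (k - m) = (-1) ^ m"
proof -
  obtain c where "k = m + c" using assms by (auto simp: le_iff_add)
  moreover have "(-1::'a) ^ c * (-1) ^ c = 1" by (simp flip: power_mult_distrib)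
  ultimately show ?thesis by (simp add: power_add mult.assoc)
qed

lemma signed_duality_eq:
  "signed_duality k f x = (\<Sum>al\<in>compositions k. (-1) ^ length al * HC_ind al (HC_res al f) x)"
  unfolding signed_duality_def duality_def sum_distrib_left
  by (rule sum.cong[OF refl]) (simp add: mult.assoc[symmetric] neg_one_power_diff length_composition_le)

lemma hprod_sum:
  "hprod k l (\<lambda>x y. \<Sum>a\<in>A. c a * F a x y) z = (\<Sum>a\<in>A. c a * hprod k l (F a) z)"
proof (cases "z \<in> carrier_mat (k + l) (k + l)")
  case True
  let ?G = "{g \<in> GLn (k + l). conjm g z \<in> parLie [k, l]}"
  let ?X = "\<lambda>g. mat k k (\<lambda>(i, j). conjm g z $$ (i, j))"
  let ?Y = "\<lambda>g. mat l l (\<lambda>(i, j). conjm g z $$ (k + i, k + j))"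
  have "(\<Sum>g\<in>?G. \<Sum>a\<in>A. c a * F a (?X g) (?Y g)) = (\<Sum>a\<in>A. \<Sum>g\<in>?G. c a * F a (?X g) (?Y g))"
    by (rule sum.swap)
  also have "\<dots> = (\<Sum>a\<in>A. c a * (\<Sum>g\<in>?G. F a (?X g) (?Y g)))" by (simp add: sum_distrib_left)
  finally have e: "(\<Sum>g\<in>?G. \<Sum>a\<in>A. c a * F a (?X g) (?Y g)) = (\<Sum>a\<in>A. c a * (\<Sum>g\<in>?G. F a (?X g) (?Y g)))" .
  show ?thesis unfolding hprod_def using True e by (simp add: sum_distrib_left mult.left_commute)
next
  case False
  then show ?thesis unfolding hprod_def by simp
qed

lemma HC_ind_HC_res_one_block: assumes be: "one_block be" and f: "f \<in> classfun (sum_list be)"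
  shows "HC_ind be (HC_res be f) = f"
proof -
  have r: "HC_res be f = f"
    using f unfolding classfun_def by (auto simp: HC_res_one_block[OF be])
  show ?thesis unfolding r
  proof (rule ext)
    fix x show "HC_ind be f x = f x"
      using HC_ind_one_block_invariant[OF be refl, of f x] f unfolding classfun_def by auto
  qed
qed

lemma hprod_signed_duality_left: assumes f: "f \<in> classfun n" and k: "k \<le> n"
  shows "hprod k (n - k) (\<lambda>x y. signed_duality k (\<lambda>x'. coprod k (n - k) f x' y) x) (z::'k::{finite,field} mat)
    = (\<Sum>al\<in>compositions k. (-1) ^ length al * HC_ind (al @ single_comp (n - k)) (HC_res (al @ single_comp (n - k)) f) z)"
proof -
  have f': "f \<in> classfun (k + (n - k))" using f k by simp
  have "hprod k (n - k) (\<lambda>x y. signed_duality k (\<lambda>x'. coprod k (n - k) f x' y) x) z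
     = (\<Sum>al\<in>compositions k. (-1) ^ length al * hprod k (n - k) (\<lambda>x y. HC_ind al (HC_res al (\<lambda>x'. coprod k (n - k) f x' y)) x) z)"
    unfolding signed_duality_eq by (rule hprod_sum)
  also have "\<dots> = (\<Sum>al\<in>compositions k. (-1) ^ length al * HC_ind (al @ single_comp (n - k)) (HC_res (al @ single_comp (n - k)) f) z)"
  proof (rule sum.cong[OF refl])
    fix al assume "al \<in> compositions k"
    then have s: "k = sum_list al" unfolding compositions_def by auto
    show "(-1) ^ length al * hprod k (n - k) (\<lambda>x y. HC_ind al (HC_res al (\<lambda>x'. coprod k (n - k) f x' y)) x) z
      = (-1) ^ length al * HC_ind (al @ single_comp (n - k)) (HC_res (al @ single_comp (n - k)) f) z"
      using hprod_HC_ind_res_left[OF f' s sum_list_single_comp[symmetric] one_block_single_comp] by simp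
  qed
  finally show ?thesis .
qed

lemma hprod_signed_duality_right: assumes f: "f \<in> classfun n" and k: "k \<le> n"
  shows "hprod k (n - k) (\<lambda>x y. signed_duality (n - k) (\<lambda>y'. coprod k (n - k) f x y') y) (z::'k::{finite,field} mat)
    = (\<Sum>be\<in>compositions (n - k). (-1) ^ length be * HC_ind (single_comp k @ be) (HC_res (single_comp k @ be) f) z)"
proof -
  have f': "f \<in> classfun (k + (n - k))" using f k by simp
  have "hprod k (n - k) (\<lambda>x y. signed_duality (n - k) (\<lambda>y'. coprod k (n - k) f x y') y) z
     = (\<Sum>be\<in>compositions (n - k). (-1) ^ length be * hprod k (n - k) (\<lambda>x y. HC_ind be (HC_res be (\<lambda>y'. coprod k (n - k) f x y')) y) z)"
    unfolding signed_duality_eq by (rule hprod_sum)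
  also have "\<dots> = (\<Sum>be\<in>compositions (n - k). (-1) ^ length be * HC_ind (single_comp k @ be) (HC_res (single_comp k @ be) f) z)"
  proof (rule sum.cong[OF refl])
    fix be assume "be \<in> compositions (n - k)"
    then have s: "n - k = sum_list be" unfolding compositions_def by auto
    show "(-1) ^ length be * hprod k (n - k) (\<lambda>x y. HC_ind be (HC_res be (\<lambda>y'. coprod k (n - k) f x y')) y) z
      = (-1) ^ length be * HC_ind (single_comp k @ be) (HC_res (single_comp k @ be) f) z"
      using hprod_HC_ind_res_right[OF f' sum_list_single_comp[symmetric] s one_block_single_comp] by simp
  qed
  finally show ?thesis .
qed

lemma signed_duality_antipode_left:
  assumes f: "(f::'k::{finite,field} mat \<Rightarrow> complex) \<in> classfun n"
  shows "(\<Sum>k\<in>{0..n}. hprod k (n - k) (\<lambda>x y. signed_duality k (\<lambda>x'. coprod k (n - k) f x' y) x) z)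
    = (if n = 0 then f z else 0)"
proof -
  have "(\<Sum>k\<in>{0..n}. hprod k (n - k) (\<lambda>x y. signed_duality k (\<lambda>x'. coprod k (n - k) f x' y) x) z)
    = (\<Sum>k\<in>{0..n}. \<Sum>al\<in>compositions k.
         (-1) ^ length al * HC_ind (al @ single_comp (n - k)) (HC_res (al @ single_comp (n - k)) f) z)"
    using hprod_signed_duality_left[OF f] by (intro sum.cong) auto
  also have "\<dots> = (if n = 0 then HC_ind [] (HC_res [] f) z else 0)"
    by (rule alternating_sum_compositions_snoc)
  finally show ?thesis using HC_ind_HC_res_one_block[OF one_block_Nil, of f] f by auto
qed

lemma signed_duality_antipode_right:
  assumes f: "(f::'k::{finite,field} mat \<Rightarrow> complex) \<in> classfun n"
  shows "(\<Sum>k\<in>{0..n}. hprod k (n - k) (\<lambda>x y. signed_duality (n - k) (\<lambda>y'. coprod k (n - k) f x y') y) z)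
    = (if n = 0 then f z else 0)"
proof -
  have "(\<Sum>k\<in>{0..n}. hprod k (n - k) (\<lambda>x y. signed_duality (n - k) (\<lambda>y'. coprod k (n - k) f x y') y) z)
    = (\<Sum>k\<in>{0..n}. \<Sum>be\<in>compositions (n - k).
         (-1) ^ length be * HC_ind (single_comp k @ be) (HC_res (single_comp k @ be) f) z)"
    using hprod_signed_duality_right[OF f] by (intro sum.cong) auto
  also have "\<dots> = (if n = 0 then HC_ind [] (HC_res [] f) z else 0)"
    by (rule alternating_sum_compositions_Cons)
  finally show ?thesis using HC_ind_HC_res_one_block[OF one_block_Nil, of f] f by auto
qed

lemma HC_res_linear:
  "HC_res lam (\<lambda>x. a * f x + b * g x) = (\<lambda>x. a * HC_res lam f x + b * HC_res lam g x)"
  by (rule ext) (simp add: HC_res_def sum.distrib sum_distrib_left algebra_simps)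

lemma HC_ind_linear:
  "HC_ind lam (\<lambda>x. a * f x + b * g x) = (\<lambda>x. a * HC_ind lam f x + b * HC_ind lam g x)"
  by (rule ext) (simp add: HC_ind_def sum.distrib sum_distrib_left algebra_simps)

lemma signed_duality_linear:
  "signed_duality n (\<lambda>x. a * f x + b * g x) = (\<lambda>x. a * signed_duality n f x + b * signed_duality n g x)"
proof (rule ext)
  fix x
  show "signed_duality n (\<lambda>x. a * f x + b * g x) x = a * signed_duality n f x + b * signed_duality n g x"
    unfolding signed_duality_eq HC_res_linear HC_ind_linear
    by (simp add: sum.distrib sum_distrib_left algebra_simps)
qed

lemma signed_duality_classfun: "signed_duality n f \<in> classfun n"
proof -
  have c: "HC_ind al (HC_res al f) \<in> classfun n" if "al \<in> compositions n" for al
    using HC_ind_classfun[of al "HC_res al f"] that unfolding compositions_def by auto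
  have e: "signed_duality n f = (\<lambda>x. \<Sum>al\<in>compositions n. (-1) ^ length al * HC_ind al (HC_res al f) x)"
    by (rule ext) (rule signed_duality_eq)
  show ?thesis unfolding e classfun_def
  proof (intro CollectI conjI allI impI ballI)
    fix x :: "'a mat" assume "x \<notin> carrier_mat n n"
    then show "(\<Sum>al\<in>compositions n. (-1) ^ length al * HC_ind al (HC_res al f) x) = 0"
      using c unfolding classfun_def by (intro sum.neutral) auto
  next
    fix x g :: "'a mat" assume x: "x \<in> carrier_mat n n" and g: "g \<in> GLn n"
    then show "(\<Sum>al\<in>compositions n. (-1) ^ length al * HC_ind al (HC_res al f) (conjm g x)) =
               (\<Sum>al\<in>compositions n. (-1) ^ length al * HC_ind al (HC_res al f) x)"
      using c unfolding classfun_def by (intro sum.cong) auto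
  qed
qed

lemma is_antipode_signed_duality: "is_antipode signed_duality"
  unfolding is_antipode_def
proof (intro conjI allI ballI)
  fix n and f :: "'k::{finite,field} mat \<Rightarrow> complex" assume f: "f \<in> classfun n"
  show "(\<lambda>z. \<Sum>k\<in>{0..n}. hprod k (n - k) (\<lambda>x y. signed_duality k (\<lambda>x'. coprod k (n - k) f x' y) x) z)
      = (if n = 0 then f else (\<lambda>x. 0))"
    using signed_duality_antipode_left[OF f] by (cases "n = 0") auto
  show "(\<lambda>z. \<Sum>k\<in>{0..n}. hprod k (n - k) (\<lambda>x y. signed_duality (n - k) (\<lambda>y'. coprod k (n - k) f x y') y) z)
      = (if n = 0 then f else (\<lambda>x. 0))"
    using signed_duality_antipode_right[OF f] by (cases "n = 0") auto
qed (use signed_duality_classfun signed_duality_linear in auto)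

lemma carrier_mat_zero_cols: "carrier_mat n 0 = {0\<^sub>m n 0 :: 'a::zero mat}"
  by (auto intro!: eq_matI)

lemma hprod_zero_right: assumes G: "G \<in> classfun n"
  shows "hprod n 0 (\<lambda>x y. G x) z = G (z::'k::{finite,field} mat)"
proof (cases "z \<in> carrier_mat n n")
  case True
  have pl: "parLie [n, 0] = (carrier_mat (n+0) (n+0) :: 'k mat set)"
  proof (rule Set.set_eqI, rule iffI)
    fix M :: "'k mat" assume "M \<in> parLie [n, 0]"
    then show "M \<in> carrier_mat (n+0) (n+0)" using parLie_carrier by fastforce
  next
    fix M :: "'k mat" assume M: "M \<in> carrier_mat (n+0) (n+0)"
    have "ll_block n 0 M = 0\<^sub>m 0 n" by (rule eq_matI) auto
    then show "M \<in> parLie [n, 0]" using parLie_two_blocks_iff[OF M] by simp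
  qed
  have pg: "parGrp [n, 0] = (GLn n :: 'k mat set)" unfolding parGrp_eq_parLie_GLn pl by (auto simp: GLn_def)
  have S: "{g \<in> GLn (n + 0). conjm g z \<in> parLie [n, 0]} = GLn n"
    unfolding pl using conjm_carrier by auto
  have m: "mat n n (\<lambda>(i, j). conjm g z $$ (i, j)) = conjm g z" if g: "g \<in> GLn n" for g
  proof -
    have c: "conjm g z \<in> carrier_mat n n" by (rule conjm_carrier[OF g])
    show ?thesis by (rule eq_matI) (use c in auto)
  qed
  have "(\<Sum>g\<in>GLn n. G (mat n n (\<lambda>(i, j). conjm g z $$ (i, j)))) = (\<Sum>g\<in>(GLn n :: 'k mat set). G z)"
    using m G True unfolding classfun_def by (intro sum.cong) auto
  then show ?thesis unfolding hprod_def pg S using True card_GLn_pos[of n, where 'k='k] by simp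
next
  case False
  then show ?thesis using G unfolding hprod_def classfun_def by simp
qed

lemma coprod_zero_right:
  assumes f: "f \<in> classfun n" and y: "(y::'k::{finite,field} mat) \<in> carrier_mat 0 0"
  shows "(\<lambda>x'. coprod n 0 f x' y) = f"
proof (rule ext)
  fix x' :: "'k mat"
  show "coprod n 0 f x' y = f x'"
  proof (cases "x' \<in> carrier_mat n n")
    case True
    have "four_block_mat x' (0\<^sub>m n 0) (0\<^sub>m 0 n) y = x'" using True y by (intro eq_matI) auto
    then show ?thesis unfolding coprod_eq_average[OF True y] carrier_mat_zero_cols by simp
  next
    case False
    then show ?thesis using f unfolding coprod_def classfun_def by simp
  qed
qed

lemma coprod_classfun_left: assumes f: "f \<in> classfun (k + l)"
  shows "(\<lambda>x'. coprod k l f x' (y::'k::{finite,field} mat)) \<in> classfun k"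
proof (cases "y \<in> carrier_mat l l")
  case True
  show ?thesis unfolding classfun_def
    using coprod_conjm_left[OF f _ _ True] by (auto simp: coprod_def)
next
  case False
  then show ?thesis unfolding classfun_def by (simp add: coprod_def)
qed

lemma hprod_coprod_top_degree:
  assumes f: "f \<in> classfun n" and T: "T f \<in> classfun n"
  shows "hprod n (n - n) (\<lambda>x y. T (\<lambda>x'. coprod n (n - n) f x' y) x) z = T f (z::'k::{finite,field} mat)"
proof -
  have "hprod n 0 (\<lambda>x y. T (\<lambda>x'. coprod n 0 f x' y) x) z = hprod n 0 (\<lambda>x y. T f x) z"
    by (rule hprod_cong) (simp add: coprod_zero_right[OF f])
  also have "\<dots> = T f z" by (rule hprod_zero_right[OF T])
  finally show ?thesis by simp
qed

lemma antipode_recursion: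
  assumes S: "is_antipode S" and f: "(f::'k::{finite,field} mat \<Rightarrow> complex) \<in> classfun n"
  shows "S n f z = (if n = 0 then f z else 0)
    - (\<Sum>k<n. hprod k (n - k) (\<lambda>x y. S k (\<lambda>x'. coprod k (n - k) f x' y) x) z)"
proof -
  have "(\<lambda>z. \<Sum>k\<in>{0..n}. hprod k (n - k) (\<lambda>x y. S k (\<lambda>x'. coprod k (n - k) f x' y) x) z)
      = (if n = 0 then f else (\<lambda>x. 0))"
    and Sf: "S n f \<in> classfun n"
    using S f unfolding is_antipode_def by blast+
  then have "(\<Sum>k\<in>{0..n}. hprod k (n - k) (\<lambda>x y. S k (\<lambda>x'. coprod k (n - k) f x' y) x) z)
      = (if n = 0 then f z else 0)"
    by (auto dest: fun_cong[of _ _ z])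
  moreover have "{0..n} = insert n {..<n}" by auto
  ultimately show ?thesis using hprod_coprod_top_degree[OF f, of "S n", OF Sf] by (simp add: algebra_simps)
qed

lemma antipode_unique:
  assumes S: "is_antipode S" and S': "is_antipode S'"
  shows "(f::'k::{finite,field} mat \<Rightarrow> complex) \<in> classfun n \<Longrightarrow> S n f = S' n f"
proof (induction n arbitrary: f rule: less_induct)
  case (less n)
  have "S k (\<lambda>x'. coprod k (n - k) f x' y) = S' k (\<lambda>x'. coprod k (n - k) f x' y)" if "k < n" for k y
    using less.IH[OF that] coprod_classfun_left[of f k "n - k"] less.prems that by simp
  then show ?case
    by (intro ext) (simp add: antipode_recursion[OF S less.prems] antipode_recursion[OF S' less.prems])
qed

theorem mainTheorem8:
  fixes D :: "nat \<Rightarrow> ('k::{finite,field} mat \<Rightarrow> complex) \<Rightarrow> 'k mat \<Rightarrow> complex"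
  defines "D \<equiv> (\<lambda>n f x. (-1) ^ n * duality n f x)"
  shows "is_antipode D \<and>
         (\<forall>S. is_antipode S \<longrightarrow> (\<forall>n. \<forall>f\<in>classfun n. S n f = D n f))"
proof -
  have "D = signed_duality" unfolding D_def by (intro ext) (simp add: signed_duality_def)
  then show ?thesis using is_antipode_signed_duality antipode_unique by blast
qed

end
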